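(* For every $\mu\in\overline{\mathbb R}$, the subspace $A_{[\mu]}$ is a subalgebra of $A_\mu$. Further, $\Delta_\mu(A_{[\mu]})\subset A_{[\mu]}\otimes A_{[\mu]}$, and $A_{[\mu]}$ becomes a bialgebra when endowed with the coproduct $\Delta_\mu$.
   Context: Let $\Gamma$ be a discrete submonoid of $\{(r,d)\in\mathbb R^2: r>0\text{ or }(r=0\text{ and }d\ge0)\}$ and $A=\bigoplus_{\gamma\in\Gamma}A^\gamma$ a connected ($A^0=k$) $\Gamma$-graded bialgebra over a field $k$, coproduct $\Delta$. Write $|a|=\gamma$ for $a\in A^\gamma$. For homogeneous $a$, $L(a)$ (resp. $R(a)$) is the set of $\beta$ (resp. $\gamma$) such that $\Delta(a)$ has a nonzero component in $A^\beta\otimes A^\gamma$. Let $\overline{\mathbb R}=\mathbb R\cup\{\infty\}$ with $\infty$ larger than all reals; $\Gamma_\infty=\{(r,d)\in\Gamma:r=0\}$, $\Gamma_\mu=\{(r,d)\in\Gamma: d=\mu r\}$ for real $\mu$, $\Gamma_{\le\mu}=\bigcup_{\nu\le\mu}\Gamma_\nu$, $\Gamma_{\ge\mu}=\bigcup_{\nu\ge\mu}\Gamma_\nu$. A homogeneous $a$ is of slope $\mu$ if $|a|\in\Gamma_\mu$, and semistable of slope $\mu$ if moreover $L(a)\subset\Gamma_{\le\mu}$ (equivalently $R(a)\subset\Gamma_{\ge\mu}$). $A_\mu$ (resp. $A_{[\mu]}$) is the span of the homogeneous elements of slope $\mu$ (resp. semistable of slope $\mu$). $p_\mu:A\to A_\mu$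 is the projection along $\bigoplus_{\gamma\notin\Gamma_\mu}A^\gamma$ and $\Delta_\mu=(p_\mu\otimes p_\mu)\circ\Delta$. *)

theory Defs
  imports "HOL-Analysis.Analysis"
begin

definition klinear :: "('k::field \<Rightarrow> 'a::ring_1 \<Rightarrow> 'a) \<Rightarrow> ('a \<Rightarrow> 'k) \<Rightarrow> bool" where
  "klinear sc f \<longleftrightarrow> (\<forall>x y. f (x + y) = f x + f y) \<and> (\<forall>c x. f (sc c x) = c * f x)"

definition kalgebra :: "('k::field \<Rightarrow> 'a::ring_1 \<Rightarrow> 'a) \<Rightarrow> bool" where
  "kalgebra sc \<longleftrightarrow> vector_space sc \<and>
     (\<forall>c x y. sc c (x * y) = sc c x * y \<and> sc c (x * y) = x * sc c y)"

text \<open>An element of A (x) A is represented by a list [(x_i,y_i)] standing for the sum of x_i (x) y_i;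
  two representatives denote the same tensor iff every k-bilinear form A x A -> k
  (i.e. every element of the dual of A (x) A) takes the same value on them.\<close>

definition bilinear_form :: "('k::field \<Rightarrow> 'a::ring_1 \<Rightarrow> 'a) \<Rightarrow> ('a \<Rightarrow> 'a \<Rightarrow> 'k) \<Rightarrow> bool" where
  "bilinear_form sc B \<longleftrightarrow> (\<forall>y. klinear sc (\<lambda>x. B x y)) \<and> (\<forall>x. klinear sc (\<lambda>y. B x y))"

definition trilinear_form :: "('k::field \<Rightarrow> 'a::ring_1 \<Rightarrow> 'a) \<Rightarrow> ('a \<Rightarrow> 'a \<Rightarrow> 'a \<Rightarrow> 'k) \<Rightarrow> bool" where
  "trilinear_form sc T \<longleftrightarrow> (\<forall>y z. klinear sc (\<lambda>x. T x y z)) \<and>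
     (\<forall>x z. klinear sc (\<lambda>y. T x y z)) \<and> (\<forall>x y. klinear sc (\<lambda>z. T x y z))"

definition teq2 :: "('k::field \<Rightarrow> 'a::ring_1 \<Rightarrow> 'a) \<Rightarrow> ('a \<times> 'a) list \<Rightarrow> ('a \<times> 'a) list \<Rightarrow> bool" where
  "teq2 sc xs ys \<longleftrightarrow> (\<forall>B. bilinear_form sc B \<longrightarrow>
     sum_list (map (\<lambda>(x, y). B x y) xs) = sum_list (map (\<lambda>(x, y). B x y) ys))"

definition teq3 :: "('k::field \<Rightarrow> 'a::ring_1 \<Rightarrow> 'a) \<Rightarrow> ('a \<times> 'a \<times> 'a) list \<Rightarrow> ('a \<times> 'a \<times> 'a) list \<Rightarrow> bool" where
  "teq3 sc xs ys \<longleftrightarrow> (\<forall>T. trilinear_form sc T \<longrightarrow>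
     sum_list (map (\<lambda>(x, y, z). T x y z) xs) = sum_list (map (\<lambda>(x, y, z). T x y z) ys))"

text \<open>(c (x) id) and (id (x) c) applied to a tensor, and the product in A (x) A.\<close>
definition cop_left :: "('a \<Rightarrow> ('a \<times> 'a) list) \<Rightarrow> ('a \<times> 'a) list \<Rightarrow> ('a \<times> 'a \<times> 'a) list" where
  "cop_left c zs = concat (map (\<lambda>(x, y). map (\<lambda>(u, v). (u, v, y)) (c x)) zs)"

definition cop_right :: "('a \<Rightarrow> ('a \<times> 'a) list) \<Rightarrow> ('a \<times> 'a) list \<Rightarrow> ('a \<times> 'a \<times> 'a) list" where
  "cop_right c zs = concat (map (\<lambda>(x, y). map (\<lambda>(u, v). (x, u, v)) (c y)) zs)"

definition tmult :: "('a::ring_1 \<times> 'a) list \<Rightarrow> ('a \<times> 'a) list \<Rightarrow> ('a \<times> 'a) list" where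
  "tmult zs ws = concat (map (\<lambda>(x, y). map (\<lambda>(u, v). (x * u, y * v)) ws) zs)"

text \<open>Since k is a field, V (x) V embeds in A (x) A (and likewise for
  triple tensors), so equalities of tensors may be tested in A (x) A.\<close>
definition bialgebra_on ::
  "('k::field \<Rightarrow> 'a::ring_1 \<Rightarrow> 'a) \<Rightarrow> 'a set \<Rightarrow> ('a \<Rightarrow> ('a \<times> 'a) list) \<Rightarrow> ('a \<Rightarrow> 'k) \<Rightarrow> bool" where
  "bialgebra_on sc V c e \<longleftrightarrow>
     module.subspace sc V \<and> 1 \<in> V \<and> (\<forall>x\<in>V. \<forall>y\<in>V. x * y \<in> V) \<and>
     (\<forall>a\<in>V. \<exists>zs. set zs \<subseteq> V \<times> V \<and> teq2 sc (c a) zs) \<and>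
     (\<forall>x\<in>V. \<forall>y\<in>V. teq2 sc (c (x + y)) (c x @ c y)) \<and>
     (\<forall>s. \<forall>x\<in>V. teq2 sc (c (sc s x)) (map (\<lambda>(u, v). (sc s u, v)) (c x))) \<and>
     (\<forall>x\<in>V. \<forall>y\<in>V. e (x + y) = e x + e y) \<and>
     (\<forall>s. \<forall>x\<in>V. e (sc s x) = s * e x) \<and>
     (\<forall>a\<in>V. teq3 sc (cop_left c (c a)) (cop_right c (c a))) \<and>
     (\<forall>a\<in>V. sum_list (map (\<lambda>(x, y). sc (e x) y) (c a)) = a) \<and>
     (\<forall>a\<in>V. sum_list (map (\<lambda>(x, y). sc (e y) x) (c a)) = a) \<and>
     (\<forall>x\<in>V. \<forall>y\<in>V. teq2 sc (c (x * y)) (tmult (c x) (c y))) \<and>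
     teq2 sc (c 1) [(1, 1)] \<and>
     (\<forall>x\<in>V. \<forall>y\<in>V. e (x * y) = e x * e y) \<and> e 1 = 1"

definition halfplane :: "(real \<times> real) set" where
  "halfplane = {(r, d). r > 0 \<or> (r = 0 \<and> d \<ge> 0)}"

definition discrete_submonoid :: "(real \<times> real) set \<Rightarrow> bool" where
  "discrete_submonoid \<Gamma> \<longleftrightarrow> \<Gamma> \<subseteq> halfplane \<and> 0 \<in> \<Gamma> \<and>
     (\<forall>\<beta>\<in>\<Gamma>. \<forall>\<gamma>\<in>\<Gamma>. \<beta> + \<gamma> \<in> \<Gamma>) \<and>
     (\<forall>\<gamma>\<in>\<Gamma>. \<exists>\<epsilon>>0. \<forall>\<delta>\<in>\<Gamma>. dist \<delta> \<gamma> < \<epsilon> \<longrightarrow> \<delta> = \<gamma>)"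

text \<open>Slopes range over extended reals; only values different from -\<infinity> are meaningful
  (the paper's R-bar = R \<union> {\<infinity>}).\<close>
definition Gam_slope :: "(real \<times> real) set \<Rightarrow> ereal \<Rightarrow> (real \<times> real) set" where
  "Gam_slope \<Gamma> \<mu> = {(r, d) \<in> \<Gamma>. if \<mu> = \<infinity> then r = 0 else d = real_of_ereal \<mu> * r}"

definition Gam_le :: "(real \<times> real) set \<Rightarrow> ereal \<Rightarrow> (real \<times> real) set" where
  "Gam_le \<Gamma> \<mu> = (\<Union>\<nu>\<in>{\<nu>. \<nu> \<noteq> -\<infinity> \<and> \<nu> \<le> \<mu>}. Gam_slope \<Gamma> \<nu>)"

definition graded_decomp ::
  "('k::field \<Rightarrow> 'a::ring_1 \<Rightarrow> 'a) \<Rightarrow> (real \<times> real) set \<Rightarrow> (real \<times> real \<Rightarrow> 'a set) \<Rightarrow> bool" where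
  "graded_decomp sc \<Gamma> Agr \<longleftrightarrow>
     (\<forall>\<gamma>. module.subspace sc (Agr \<gamma>)) \<and> (\<forall>\<gamma>. \<gamma> \<notin> \<Gamma> \<longrightarrow> Agr \<gamma> = {0}) \<and>
     (\<forall>a. \<exists>!f. finite {\<gamma>. f \<gamma> \<noteq> 0} \<and> (\<forall>\<gamma>. f \<gamma> \<in> Agr \<gamma>) \<and> a = (\<Sum>\<gamma>\<in>{\<gamma>. f \<gamma> \<noteq> 0}. f \<gamma>))"

definition hcomp :: "(real \<times> real \<Rightarrow> 'a::ring_1 set) \<Rightarrow> 'a \<Rightarrow> real \<times> real \<Rightarrow> 'a" where
  "hcomp Agr a = (THE f. finite {\<gamma>. f \<gamma> \<noteq> 0} \<and> (\<forall>\<gamma>. f \<gamma> \<in> Agr \<gamma>) \<and> a = (\<Sum>\<gamma>\<in>{\<gamma>. f \<gamma> \<noteq> 0}. f \<gamma>))"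

definition proj_slope :: "(real \<times> real) set \<Rightarrow> (real \<times> real \<Rightarrow> 'a::ring_1 set) \<Rightarrow> ereal \<Rightarrow> 'a \<Rightarrow> 'a" where
  "proj_slope \<Gamma> Agr \<mu> a = (\<Sum>\<gamma>\<in>{\<gamma> \<in> Gam_slope \<Gamma> \<mu>. hcomp Agr a \<gamma> \<noteq> 0}. hcomp Agr a \<gamma>)"

definition Delta_slope ::
  "(real \<times> real) set \<Rightarrow> (real \<times> real \<Rightarrow> 'a::ring_1 set) \<Rightarrow> ('a \<Rightarrow> ('a \<times> 'a) list) \<Rightarrow> ereal \<Rightarrow> 'a \<Rightarrow> ('a \<times> 'a) list" where
  "Delta_slope \<Gamma> Agr \<Delta> \<mu> a = map (\<lambda>(x, y). (proj_slope \<Gamma> Agr \<mu> x, proj_slope \<Gamma> Agr \<mu> y)) (\<Delta> a)"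

definition Lset ::
  "('k::field \<Rightarrow> 'a::ring_1 \<Rightarrow> 'a) \<Rightarrow> (real \<times> real \<Rightarrow> 'a set) \<Rightarrow> ('a \<Rightarrow> ('a \<times> 'a) list) \<Rightarrow> 'a \<Rightarrow> (real \<times> real) set" where
  "Lset sc Agr \<Delta> a = {\<beta>. \<exists>\<gamma>. \<not> teq2 sc (map (\<lambda>(x, y). (hcomp Agr x \<beta>, hcomp Agr y \<gamma>)) (\<Delta> a)) []}"

definition semistable ::
  "('k::field \<Rightarrow> 'a::ring_1 \<Rightarrow> 'a) \<Rightarrow> (real \<times> real) set \<Rightarrow> (real \<times> real \<Rightarrow> 'a set) \<Rightarrow> ('a \<Rightarrow> ('a \<times> 'a) list) \<Rightarrow> ereal \<Rightarrow> 'a \<Rightarrow> bool" where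
  "semistable sc \<Gamma> Agr \<Delta> \<mu> a \<longleftrightarrow>
     (\<exists>\<gamma>\<in>Gam_slope \<Gamma> \<mu>. a \<in> Agr \<gamma>) \<and> Lset sc Agr \<Delta> a \<subseteq> Gam_le \<Gamma> \<mu>"

definition A_slope :: "('k::field \<Rightarrow> 'a::ring_1 \<Rightarrow> 'a) \<Rightarrow> (real \<times> real) set \<Rightarrow> (real \<times> real \<Rightarrow> 'a set) \<Rightarrow> ereal \<Rightarrow> 'a set" where
  "A_slope sc \<Gamma> Agr \<mu> = module.span sc {a. \<exists>\<gamma>\<in>Gam_slope \<Gamma> \<mu>. a \<in> Agr \<gamma>}"

definition A_ss :: "('k::field \<Rightarrow> 'a::ring_1 \<Rightarrow> 'a) \<Rightarrow> (real \<times> real) set \<Rightarrow> (real \<times> real \<Rightarrow> 'a set) \<Rightarrow> ('a \<Rightarrow> ('a \<times> 'a) list) \<Rightarrow> ereal \<Rightarrow> 'a set" where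
  "A_ss sc \<Gamma> Agr \<Delta> \<mu> = module.span sc {a. semistable sc \<Gamma> Agr \<Delta> \<mu> a}"

definition connected_graded_bialgebra ::
  "('k::field \<Rightarrow> 'a::ring_1 \<Rightarrow> 'a) \<Rightarrow> (real \<times> real) set \<Rightarrow> (real \<times> real \<Rightarrow> 'a set) \<Rightarrow> ('a \<Rightarrow> ('a \<times> 'a) list) \<Rightarrow> ('a \<Rightarrow> 'k) \<Rightarrow> bool" where
  "connected_graded_bialgebra sc \<Gamma> Agr \<Delta> \<epsilon> \<longleftrightarrow>
     kalgebra sc \<and> discrete_submonoid \<Gamma> \<and> graded_decomp sc \<Gamma> Agr \<and>
     bialgebra_on sc UNIV \<Delta> \<epsilon> \<and>
     (\<forall>\<beta> \<gamma> x y. x \<in> Agr \<beta> \<longrightarrow> y \<in> Agr \<gamma> \<longrightarrow> x * y \<in> Agr (\<beta> + \<gamma>)) \<and>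
     Agr 0 = range (\<lambda>c. sc c 1) \<and>
     (\<forall>\<gamma> a. a \<in> Agr \<gamma> \<longrightarrow> (\<exists>zs. teq2 sc (\<Delta> a) zs \<and>
        (\<forall>(x, y)\<in>set zs. \<exists>\<beta> \<beta>'. \<beta> + \<beta>' = \<gamma> \<and> x \<in> Agr \<beta> \<and> y \<in> Agr \<beta>'))) \<and>
     (\<forall>\<gamma> a. \<gamma> \<noteq> 0 \<longrightarrow> a \<in> Agr \<gamma> \<longrightarrow> \<epsilon> a = 0)"

end

theory Submission
  imports Defs
begin

text \<open>For a
  homogeneous \<open>a\<close> of degree \<open>\<gamma>\<close>, \<open>\<Delta> a\<close> is a sum of pure tensors labelled by bidegrees
  \<open>(\<beta>, \<beta>')\<close> with \<open>\<beta> + \<beta>' = \<gamma>\<close>; \<open>a\<close> of slope \<open>\<mu>\<close> is semistable iff the terms whose left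
  degree lies outside \<open>\<Gamma>\<^sub>\<le>\<^sub>\<mu>\<close> cancel, so that \<open>\<Delta> a\<close> has a representation with all left
  degrees in \<open>\<Gamma>\<^sub>\<le>\<^sub>\<mu>\<close>. Multiplying such representations shows that semistable elements are
  closed under products and, since two degrees in \<open>\<Gamma>\<^sub>\<le>\<^sub>\<mu>\<close> can only add up to slope \<open>\<mu>\<close> if
  both have slope \<open>\<mu>\<close>, that \<open>\<Delta>\<^sub>\<mu>\<close> is multiplicative on \<open>A\<^sub>[\<^sub>\<mu>\<^sub>]\<close>. The counit axioms
  hold because \<open>\<epsilon>\<close> vanishes outside degree \<open>0\<close> and \<open>p\<^sub>\<mu>\<close> fixes \<open>A\<^sub>\<mu>\<close>; coassociativity holds
  because \<open>\<Delta>\<close> preserves degrees, so that \<open>\<Delta>\<^sub>\<mu> (p\<^sub>\<mu> x)\<close> and \<open>\<Delta>\<^sub>\<mu> x\<close> agree. Finally a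
  block of \<open>\<Delta>\<^sub>\<mu> a\<close> of bidegree \<open>(\<beta>, \<beta>')\<close> is written as \<open>\<Sum> X b \<otimes> b\<close> with independent
  \<open>b\<close> and then as \<open>\<Sum> e \<otimes> Y e\<close> with independent \<open>e\<close> among the \<open>X b\<close>; coassociativity
  tested against the coordinate functionals of the \<open>b\<close> and the \<open>e\<close> shows that the \<open>X b\<close> and
  the \<open>Y e\<close> are semistable.\<close>

section \<open>Tensors tested against multilinear forms\<close>

definition eval2 :: "('a \<Rightarrow> 'a \<Rightarrow> 'k::comm_monoid_add) \<Rightarrow> ('a \<times> 'a) list \<Rightarrow> 'k" where
  "eval2 B zs = sum_list (map (\<lambda>(x, y). B x y) zs)"

definition eval3 :: "('a \<Rightarrow> 'a \<Rightarrow> 'a \<Rightarrow> 'k::comm_monoid_add) \<Rightarrow> ('a \<times> 'a \<times> 'a) list \<Rightarrow> 'k" where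
  "eval3 T ts = sum_list (map (\<lambda>(x, y, z). T x y z) ts)"

lemma eval2_simps [simp]:
  "eval2 B [] = 0"
  "eval2 B ((x, y) # zs) = B x y + eval2 B zs"
  "eval2 B (xs @ ys) = eval2 B xs + eval2 B ys"
  by (auto simp: eval2_def)

lemma teq2_iff_eval2: "teq2 sc xs ys \<longleftrightarrow> (\<forall>B. bilinear_form sc B \<longrightarrow> eval2 B xs = eval2 B ys)"
  by (simp add: teq2_def eval2_def)

lemma teq3_iff_eval3: "teq3 sc xs ys \<longleftrightarrow> (\<forall>T. trilinear_form sc T \<longrightarrow> eval3 T xs = eval3 T ys)"
  by (simp add: teq3_def eval3_def)

lemma teq2I: "(\<And>B. bilinear_form sc B \<Longrightarrow> eval2 B xs = eval2 B ys) \<Longrightarrow> teq2 sc xs ys"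
  by (simp add: teq2_iff_eval2)

lemma teq2D: "teq2 sc xs ys \<Longrightarrow> bilinear_form sc B \<Longrightarrow> eval2 B xs = eval2 B ys"
  by (simp add: teq2_iff_eval2)

lemma teq3D: "teq3 sc xs ys \<Longrightarrow> trilinear_form sc T \<Longrightarrow> eval3 T xs = eval3 T ys"
  by (simp add: teq3_iff_eval3)

lemma teq2_refl: "teq2 sc xs xs"
  and teq2_sym: "teq2 sc xs ys \<Longrightarrow> teq2 sc ys xs"
  and teq2_trans [trans]: "teq2 sc xs ys \<Longrightarrow> teq2 sc ys zs \<Longrightarrow> teq2 sc xs zs"
  and teq2_append: "teq2 sc xs xs' \<Longrightarrow> teq2 sc ys ys' \<Longrightarrow> teq2 sc (xs @ ys) (xs' @ ys')"
  by (simp_all add: teq2_iff_eval2)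

lemma eval2_map: "eval2 B (map (\<lambda>(x, y). (f x, g y)) zs) = eval2 (\<lambda>x y. B (f x) (g y)) zs"
  by (induct zs) auto

lemma eval2_add: "eval2 (\<lambda>x y. F x y + G x y) zs = eval2 F zs + eval2 G zs"
  by (induct zs) (auto simp: add_ac)

lemma eval2_mult_left: "eval2 (\<lambda>x y. (c::'k::comm_ring) * F x y) zs = c * eval2 F zs"
  by (induct zs) (auto simp: algebra_simps)

lemma eval2_mult_right: "eval2 (\<lambda>x y. F x y * (c::'k::comm_ring)) zs = eval2 F zs * c"
  by (induct zs) (auto simp: algebra_simps)

lemma eval2_sum: "eval2 (\<lambda>x y. \<Sum>i\<in>I. F i x y) zs = (\<Sum>i\<in>I. eval2 (F i) zs)"
  by (induct zs) (auto simp: sum.distrib)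

lemma eval2_cong: "(\<And>x y. (x, y) \<in> set zs \<Longrightarrow> F x y = G x y) \<Longrightarrow> eval2 F zs = eval2 G zs"
  by (induct zs) auto

lemma eval2_eq_0: "(\<And>x y. (x, y) \<in> set zs \<Longrightarrow> F x y = 0) \<Longrightarrow> eval2 F zs = 0"
  by (induct zs) auto

lemma eval2_swap:
  "eval2 (\<lambda>x y. eval2 (\<lambda>u v. F x y u v) ws) zs = eval2 (\<lambda>u v. eval2 (\<lambda>x y. F x y u v) zs) ws"
proof (induct zs)
  case Nil then show ?case by (induct ws) auto
next
  case (Cons z zs) then show ?case by (cases z) (simp add: eval2_add)
qed

lemma eval2_concat: "eval2 B (concat (map f xs)) = (\<Sum>x\<leftarrow>xs. eval2 B (f x))"
  by (induct xs) auto

lemma eval2_graph_left: "eval2 B (map (\<lambda>b. (f b, b)) bs) = (\<Sum>b\<leftarrow>bs. B (f b) b)"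
  and eval2_graph_right: "eval2 B (map (\<lambda>b. (b, f b)) bs) = (\<Sum>b\<leftarrow>bs. B b (f b))"
  by (induct bs) auto

lemma eval3_cop_left: "eval3 T (cop_left c zs) = eval2 (\<lambda>x y. eval2 (\<lambda>u v. T u v y) (c x)) zs"
proof (induct zs)
  case Nil then show ?case by (simp add: eval3_def cop_left_def)
next
  case (Cons z zs)
  have "sum_list (map ((\<lambda>(x, y, z). T x y z) \<circ> (\<lambda>(u, v). (u, v, w))) ws) = eval2 (\<lambda>u v. T u v w) ws"
    for ws w by (induct ws) auto
  with Cons show ?case by (cases z) (auto simp: cop_left_def eval3_def)
qed

lemma eval3_cop_right: "eval3 T (cop_right c zs) = eval2 (\<lambda>x y. eval2 (\<lambda>u v. T x u v) (c y)) zs"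
proof (induct zs)
  case Nil then show ?case by (simp add: eval3_def cop_right_def)
next
  case (Cons z zs)
  have "sum_list (map ((\<lambda>(x, y, z). T x y z) \<circ> Pair w) ws) = eval2 (T w) ws" for ws w
    by (induct ws) auto
  with Cons show ?case by (cases z) (auto simp: cop_right_def eval3_def)
qed

lemma eval2_tmult: "eval2 B (tmult zs ws) = eval2 (\<lambda>x y. eval2 (\<lambda>u v. B (x * u) (y * v)) ws) zs"
proof (induct zs)
  case Nil then show ?case by (simp add: tmult_def)
next
  case (Cons z zs)
  have "eval2 B (map (\<lambda>(u, v). (x * u, y * v)) ws) = eval2 (\<lambda>u v. B (x * u) (y * v)) ws" for x y
    by (induct ws) auto
  with Cons show ?case by (cases z) (auto simp: tmult_def)
qed

definition label_block :: "('l \<times> 'p) list \<Rightarrow> 'l \<Rightarrow> 'p list" where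
  "label_block L l = map snd (filter (\<lambda>e. fst e = l) L)"

lemma eval2_filter_labels:
  assumes "\<And>l x y. (l, (x, y)) \<in> set L \<Longrightarrow> B' x y = (if P l then B x y else 0)"
  shows "eval2 B' (map snd L) = eval2 B (map snd (filter (\<lambda>e. P (fst e)) L))"
  using assms
proof (induct L)
  case (Cons e L)
  obtain l x y where e: "e = (l, (x, y))" by (cases e) auto
  have "B' x y = (if P l then B x y else 0)" using Cons.prems e by auto
  moreover have "eval2 B' (map snd L) = eval2 B (map snd (filter (\<lambda>e. P (fst e)) L))"
    using Cons by auto
  ultimately show ?case using e by auto
qed simp

lemma eval2_label_block:
  "(\<And>l x y. (l, (x, y)) \<in> set L \<Longrightarrow> B' x y = (if l = l0 then B x y else 0)) \<Longrightarrow>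
    eval2 B' (map snd L) = eval2 B (label_block L l0)"
  unfolding label_block_def by (rule eval2_filter_labels)

lemma label_block_filter: "P l \<Longrightarrow> label_block (filter (\<lambda>e. P (fst e)) L) l = label_block L l"
  by (induct L) (auto simp: label_block_def)

lemma eval2_group_labels:
  "eval2 B (map snd L) = (\<Sum>l\<in>fst ` set L. eval2 B (label_block L l))"
proof (induct L)
  case Nil then show ?case by simp
next
  case (Cons e L)
  obtain l x y where e: "e = (l, (x, y))" by (cases e) auto
  let ?K = "fst ` set L"
  have "label_block (e # L) l' = (if l = l' then [(x, y)] else []) @ label_block L l'" for l'
    by (simp add: label_block_def e)
  then have "(\<Sum>l'\<in>insert l ?K. eval2 B (label_block (e # L) l'))
      = (\<Sum>l'\<in>insert l ?K. (if l = l' then B x y else 0) + eval2 B (label_block L l'))"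
    by (intro sum.cong) auto
  also have "\<dots> = B x y + (\<Sum>l'\<in>insert l ?K. eval2 B (label_block L l'))"
    by (simp add: sum.distrib)
  also have "(\<Sum>l'\<in>insert l ?K. eval2 B (label_block L l')) = (\<Sum>l'\<in>?K. eval2 B (label_block L l'))"
  proof (cases "l \<in> ?K")
    case False
    then have "label_block L l = []"
      by (simp add: label_block_def filter_empty_conv) (metis image_eqI)
    with False show ?thesis by simp
  qed (simp add: insert_absorb)
  finally show ?case using Cons e by simp
qed

lemma teq2_label_blocks:
  "teq2 sc (map snd L) (concat (map (label_block L) (remdups (map fst L))))"
  by (rule teq2I)
    (simp add: eval2_group_labels eval2_concat sum_list_distinct_conv_sum_set)

definition rep_mult :: "('l::plus \<times> ('a::times \<times> 'a)) list \<Rightarrow> ('l \<times> ('a \<times> 'a)) list \<Rightarrow> ('l \<times> ('a \<times> 'a)) list" where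
  "rep_mult L M = concat (map (\<lambda>(l, (x, y)). map (\<lambda>(m, (u, v)). (l + m, (x * u, y * v))) M) L)"

lemma set_rep_mult:
  "e \<in> set (rep_mult L M) \<longleftrightarrow>
    (\<exists>l x y m u v. (l, (x, y)) \<in> set L \<and> (m, (u, v)) \<in> set M \<and> e = (l + m, (x * u, y * v)))"
  by (force simp: rep_mult_def)

lemma map_snd_rep_mult: "map snd (rep_mult L M) = tmult (map snd L) (map snd M)"
proof (induct L)
  case (Cons e L)
  obtain l x y where e: "e = (l, (x, y))" by (cases e) auto
  have "map snd (map (\<lambda>(m, (u, v)). (l + m, (x * u, y * v))) M) = map (\<lambda>(u, v). (x * u, y * v)) (map snd M)"
    by (induct M) auto
  with Cons e show ?case by (simp add: rep_mult_def tmult_def)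
qed (simp add: rep_mult_def tmult_def)

lemma filter_rep_mult:
  assumes "\<And>l x y m u v. (l, (x, y)) \<in> set L \<Longrightarrow> (m, (u, v)) \<in> set M \<Longrightarrow> P (l + m) \<longleftrightarrow> P l \<and> P m"
  shows "filter (\<lambda>e. P (fst e)) (rep_mult L M) = rep_mult (filter (\<lambda>e. P (fst e)) L) (filter (\<lambda>e. P (fst e)) M)"
  using assms
proof (induct L)
  case (Cons e L)
  obtain l x y where e: "e = (l, (x, y))" by (cases e) auto
  let ?f = "\<lambda>(m, (u, v)). (l + m, (x * u, y * v))"
  have "P (l + fst f) \<longleftrightarrow> P l \<and> P (fst f)" if "f \<in> set M" for f
    using Cons.prems[of l x y] e that by (cases f) auto
  then have "filter (\<lambda>e. P (fst e)) (map ?f M) = map ?f (filter (\<lambda>e. P l \<and> P (fst e)) M)"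
    unfolding filter_map by (intro arg_cong[where f = "map ?f"] filter_cong) (auto split: prod.splits)
  then have "filter (\<lambda>e. P (fst e)) (map ?f M) = (if P l then map ?f (filter (\<lambda>e. P (fst e)) M) else [])"
    by simp
  moreover have "filter (\<lambda>e. P (fst e)) (rep_mult L M) = rep_mult (filter (\<lambda>e. P (fst e)) L) (filter (\<lambda>e. P (fst e)) M)"
    by (rule Cons.hyps) (meson Cons.prems list.set_intros(2))
  ultimately show ?case using e by (simp add: rep_mult_def)
qed (simp add: rep_mult_def)

definition klinear_endo :: "('k::field \<Rightarrow> 'a::ring_1 \<Rightarrow> 'a) \<Rightarrow> ('a \<Rightarrow> 'a) \<Rightarrow> bool" where
  "klinear_endo sc f \<longleftrightarrow> (\<forall>x y. f (x + y) = f x + f y) \<and> (\<forall>c x. f (sc c x) = sc c (f x))"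

lemma klinear_endo_id: "klinear_endo sc (\<lambda>x. x)"
  by (simp add: klinear_endo_def)

lemma klinear_add: "klinear sc f \<Longrightarrow> f (x + y) = f x + f y"
  and klinear_scale: "klinear sc f \<Longrightarrow> f (sc c x) = c * f x"
  by (auto simp: klinear_def)

lemma klinear_zero: "klinear sc f \<Longrightarrow> f 0 = 0"
  using klinear_add[of sc f 0 0] by (metis add_0 add_cancel_right_right)

lemma klinear_sum: "klinear sc f \<Longrightarrow> f (sum g S) = (\<Sum>i\<in>S. f (g i))"
  by (induct S rule: infinite_finite_induct) (auto simp: klinear_zero klinear_add)

lemma klinear_eval2: "klinear sc f \<Longrightarrow> f (eval2 F zs) = eval2 (\<lambda>x y. f (F x y)) zs"
  by (induct zs) (auto simp: klinear_zero klinear_add)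

lemma klinear_compose: "klinear sc f \<Longrightarrow> klinear_endo sc g \<Longrightarrow> klinear sc (\<lambda>x. f (g x))"
  by (simp add: klinear_def klinear_endo_def)

lemma klinear_endo_zero: "klinear_endo sc f \<Longrightarrow> f 0 = 0"
  unfolding klinear_endo_def by (metis add_cancel_right_right add_0)

lemma klinear_endo_eval2: "klinear_endo sc f \<Longrightarrow> f (eval2 F zs) = eval2 (\<lambda>x y. f (F x y)) zs"
  by (induct zs) (auto simp: klinear_endo_zero klinear_endo_def)

lemma bilinear_form_scale_left: "bilinear_form sc B \<Longrightarrow> B (sc c x) y = c * B x y"
  and bilinear_form_scale_right: "bilinear_form sc B \<Longrightarrow> B x (sc c y) = c * B x y"
  by (auto simp: bilinear_form_def klinear_def)

lemma bilinear_form_zero_left: "bilinear_form sc B \<Longrightarrow> B 0 y = 0"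
  and bilinear_form_zero_right: "bilinear_form sc B \<Longrightarrow> B x 0 = 0"
  using klinear_zero[of sc "\<lambda>x. B x y"] klinear_zero[of sc "B x"] by (auto simp: bilinear_form_def)

lemma bilinear_form_compose:
  "bilinear_form sc B \<Longrightarrow> klinear_endo sc f \<Longrightarrow> klinear_endo sc g \<Longrightarrow>
    bilinear_form sc (\<lambda>x y. B (f x) (g y))"
  by (simp add: bilinear_form_def klinear_def klinear_endo_def)

lemma bilinear_form_eval2_right:
  "(\<And>u v. bilinear_form sc (\<lambda>x y. F x y u v)) \<Longrightarrow> bilinear_form sc (\<lambda>x y. eval2 (F x y) ws)"
  by (induct ws) (auto simp: bilinear_form_def klinear_def algebra_simps)

lemma eval2_scale_left:
  "bilinear_form sc B \<Longrightarrow> eval2 B (map (\<lambda>(u, v). (sc s u, v)) zs) = s * eval2 B zs"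
  by (induct zs) (auto simp: bilinear_form_scale_left algebra_simps)

lemma eval2_drop_zeros:
  "bilinear_form sc B \<Longrightarrow> eval2 B (filter (\<lambda>(x, y). x \<noteq> 0 \<and> y \<noteq> 0) zs) = eval2 B zs"
  by (induct zs) (auto simp: bilinear_form_zero_left bilinear_form_zero_right)

lemma teq2_map:
  "klinear_endo sc f \<Longrightarrow> klinear_endo sc g \<Longrightarrow> teq2 sc xs ys \<Longrightarrow>
    teq2 sc (map (\<lambda>(x, y). (f x, g y)) xs) (map (\<lambda>(x, y). (f x, g y)) ys)"
  using bilinear_form_compose unfolding teq2_iff_eval2 eval2_map by blast

lemma teq2_concat:
  "(\<And>l. l \<in> set ls \<Longrightarrow> teq2 sc (f l) (g l)) \<Longrightarrow> teq2 sc (concat (map f ls)) (concat (map g ls))"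
  by (induct ls) (auto intro: teq2_append teq2_refl)

definition swap_tensor :: "('a \<times> 'a) list \<Rightarrow> ('a \<times> 'a) list" where
  "swap_tensor zs = map prod.swap zs"

lemma eval2_swap_tensor: "eval2 B (swap_tensor zs) = eval2 (\<lambda>x y. B y x) zs"
  by (induct zs) (auto simp: swap_tensor_def)

lemma teq2_swap_tensor: "teq2 sc xs ys \<Longrightarrow> teq2 sc (swap_tensor xs) (swap_tensor ys)"
  unfolding teq2_iff_eval2 eval2_swap_tensor by (auto simp: bilinear_form_def)

lemma trilinear_form_compose:
  "trilinear_form sc T \<Longrightarrow> klinear_endo sc f \<Longrightarrow> klinear_endo sc g \<Longrightarrow> klinear_endo sc h \<Longrightarrow>
    trilinear_form sc (\<lambda>x y z. T (f x) (g y) (h z))"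
  by (simp add: trilinear_form_def klinear_def klinear_endo_def)

lemma trilinear_form_bilinear_times:
  "bilinear_form sc B \<Longrightarrow> klinear sc \<phi> \<Longrightarrow> trilinear_form sc (\<lambda>u v w. B u v * \<phi> w)"
  and trilinear_form_times_bilinear:
  "bilinear_form sc B \<Longrightarrow> klinear sc \<phi> \<Longrightarrow> trilinear_form sc (\<lambda>u v w. \<phi> u * B v w)"
  by (simp_all add: trilinear_form_def bilinear_form_def klinear_def algebra_simps)

lemma trilinear_form_fix_third: "trilinear_form sc T \<Longrightarrow> bilinear_form sc (\<lambda>u v. T u v w)"
  and trilinear_form_fix_first: "trilinear_form sc T \<Longrightarrow> bilinear_form sc (\<lambda>v w. T u v w)"
  by (auto simp: trilinear_form_def bilinear_form_def)

lemma trilinear_form_zero_third: "trilinear_form sc T \<Longrightarrow> T u v 0 = 0"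
  and trilinear_form_zero_first: "trilinear_form sc T \<Longrightarrow> T 0 v w = 0"
  by (auto dest: trilinear_form_fix_third trilinear_form_fix_first
      intro: bilinear_form_zero_right bilinear_form_zero_left)

section \<open>Algebras over a field\<close>

locale k_algebra = vs: vector_space sc
  for sc :: "'k::field \<Rightarrow> 'a::ring_1 \<Rightarrow> 'a" +
  assumes scale_mult_left: "sc c (x * y) = sc c x * y"
    and scale_mult_right: "sc c (x * y) = x * sc c y"

lemma k_algebra_if_kalgebra: "kalgebra sc \<Longrightarrow> k_algebra sc"
  unfolding kalgebra_def k_algebra_def k_algebra_axioms_def by blast

definition biorthogonal :: "('k::field \<Rightarrow> 'a::ring_1 \<Rightarrow> 'a) \<Rightarrow> 'a list \<Rightarrow> ('a \<Rightarrow> 'a \<Rightarrow> 'k) \<Rightarrow> bool" where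
  "biorthogonal sc bs \<phi> \<longleftrightarrow> distinct bs \<and> (\<forall>b\<in>set bs. klinear sc (\<phi> b)) \<and>
     (\<forall>b\<in>set bs. \<forall>b'\<in>set bs. \<phi> b b' = (if b' = b then 1 else 0))"

lemma biorthogonal_sum_list:
  assumes "biorthogonal sc bs \<phi>" "b \<in> set bs"
  shows "(\<Sum>b'\<leftarrow>bs. F b' * \<phi> b b') = F b"
proof -
  have "(\<Sum>b'\<leftarrow>bs. F b' * \<phi> b b') = (\<Sum>b'\<in>set bs. F b' * \<phi> b b')"
    using assms(1) by (simp add: biorthogonal_def sum_list_distinct_conv_sum_set)
  also have "\<dots> = (\<Sum>b'\<in>set bs. if b' = b then F b' else 0)"
    using assms by (intro sum.cong) (auto simp: biorthogonal_def)
  also have "\<dots> = F b" using assms(2) by (simp add: sum.delta)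
  finally show ?thesis .
qed

context k_algebra
begin

lemma klinear_endo_mult_left: "klinear_endo sc (\<lambda>x. y * x)"
  by (simp add: klinear_endo_def distrib_left scale_mult_right)

lemma klinear_endo_mult_right: "klinear_endo sc (\<lambda>x. x * y)"
  by (simp add: klinear_endo_def distrib_right scale_mult_left)

lemma klinear_endo_scale: "klinear_endo sc (\<lambda>x. sc c x)"
  by (simp add: klinear_endo_def vs.scale_right_distrib vs.scale_left_commute)

lemma teq2_tmult:
  assumes "teq2 sc zs zs'" "teq2 sc ws ws'"
  shows "teq2 sc (tmult zs ws) (tmult zs' ws')"
proof (rule teq2I)
  fix B assume B: "bilinear_form sc B"
  have left: "bilinear_form sc (\<lambda>x y. eval2 (\<lambda>u v. B (x * u) (y * v)) W)" for W
    by (intro bilinear_form_eval2_right bilinear_form_compose[OF B] klinear_endo_mult_right)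
  have right: "bilinear_form sc (\<lambda>u v. eval2 (\<lambda>x y. B (x * u) (y * v)) Z)" for Z
    by (intro bilinear_form_eval2_right bilinear_form_compose[OF B] klinear_endo_mult_left)
  have "eval2 B (tmult zs ws) = eval2 (\<lambda>x y. eval2 (\<lambda>u v. B (x * u) (y * v)) ws) zs'"
    unfolding eval2_tmult by (rule teq2D[OF assms(1) left])
  also have "\<dots> = eval2 (\<lambda>u v. eval2 (\<lambda>x y. B (x * u) (y * v)) zs') ws"
    by (rule eval2_swap)
  also have "\<dots> = eval2 (\<lambda>u v. eval2 (\<lambda>x y. B (x * u) (y * v)) zs') ws'"
    by (rule teq2D[OF assms(2) right])
  also have "\<dots> = eval2 B (tmult zs' ws')"
    unfolding eval2_tmult by (rule eval2_swap[symmetric])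
  finally show "eval2 B (tmult zs ws) = eval2 B (tmult zs' ws')" .
qed

lemma klinear_eq_on_span:
  assumes f: "klinear sc f" and g: "klinear sc g" and eq: "\<And>s. s \<in> S \<Longrightarrow> f s = g s"
    and x: "x \<in> vs.span S"
  shows "f x = g x"
  using x
proof (induct rule: vs.span_induct_alt)
  case base then show ?case by (simp add: klinear_zero[OF f] klinear_zero[OF g])
next
  case (step c s y) then show ?case
    by (simp add: klinear_add[OF f] klinear_add[OF g] klinear_scale[OF f] klinear_scale[OF g] eq)
qed

lemma independent_biorthogonal:
  assumes "vs.independent (set bs)" "distinct bs"
  obtains \<phi> where "biorthogonal sc bs \<phi>"
proof -
  interpret vector_space_pair sc "(*) :: 'k \<Rightarrow> 'k \<Rightarrow> 'k"
    by unfold_locales (simp_all add: algebra_simps)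
  have "\<forall>b. \<exists>g. klinear sc g \<and> (\<forall>x\<in>set bs. g x = (if x = b then 1 else 0))"
  proof
    fix b
    obtain g where "Vector_Spaces.linear sc (*) g" "\<forall>x\<in>set bs. g x = (if x = b then 1 else 0)"
      using linear_independent_extend[OF assms(1), of "\<lambda>x. if x = b then 1 else 0"] by blast
    then show "\<exists>g. klinear sc g \<and> (\<forall>x\<in>set bs. g x = (if x = b then 1 else 0))"
      by (intro exI[of _ g]) (simp add: Vector_Spaces.linear_iff klinear_def)
  qed
  then obtain \<phi> where "\<And>b. klinear sc (\<phi> b)" "\<And>b x. x \<in> set bs \<Longrightarrow> \<phi> b x = (if x = b then 1 else 0)"
    by metis
  then have "biorthogonal sc bs \<phi>" using assms(2) by (simp add: biorthogonal_def)
  then show thesis by (rule that)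
qed

lemma biorthogonal_span_coordinates:
  assumes bs: "biorthogonal sc bs \<phi>" and y: "y \<in> vs.span (set bs)"
  shows "(\<Sum>b\<in>set bs. sc (\<phi> b y) b) = y"
proof -
  obtain u where u: "y = (\<Sum>v\<in>set bs. sc (u v) v)" using y vs.span_finite[of "set bs"] by auto
  have "\<phi> b y = u b" if b: "b \<in> set bs" for b
  proof -
    have \<phi>: "klinear sc (\<phi> b)" using bs b by (simp add: biorthogonal_def)
    have "\<phi> b y = (\<Sum>v\<in>set bs. if v = b then u v else 0)"
      unfolding u klinear_sum[OF \<phi>] using bs b
      by (intro sum.cong) (auto simp: klinear_scale[OF \<phi>] biorthogonal_def)
    then show ?thesis using b by (simp add: sum.delta)
  qed
  then show ?thesis using u by simp
qed

lemma teq2_biorthogonal_expansion: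
  assumes bs: "biorthogonal sc bs \<phi>" "snd ` set zs \<subseteq> vs.span (set bs)"
  shows "teq2 sc zs (map (\<lambda>b. (eval2 (\<lambda>x y. sc (\<phi> b y) x) zs, b)) bs)"
proof (rule teq2I)
  fix B assume B: "bilinear_form sc B"
  have "eval2 B (map (\<lambda>b. (eval2 (\<lambda>x y. sc (\<phi> b y) x) zs, b)) bs)
      = (\<Sum>b\<in>set bs. B (eval2 (\<lambda>x y. sc (\<phi> b y) x) zs) b)"
    using bs(1) by (simp add: eval2_graph_left sum_list_distinct_conv_sum_set biorthogonal_def)
  also have "\<dots> = (\<Sum>b\<in>set bs. eval2 (\<lambda>x y. \<phi> b y * B x b) zs)"
  proof (rule sum.cong)
    fix b
    have Bb: "klinear sc (\<lambda>x. B x b)" using B by (simp add: bilinear_form_def)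
    show "B (eval2 (\<lambda>x y. sc (\<phi> b y) x) zs) b = eval2 (\<lambda>x y. \<phi> b y * B x b) zs"
      unfolding klinear_eval2[OF Bb] by (simp add: bilinear_form_scale_left[OF B])
  qed simp
  also have "\<dots> = eval2 (\<lambda>x y. B x (\<Sum>b\<in>set bs. sc (\<phi> b y) b)) zs"
  proof -
    have Bx: "klinear sc (B x)" for x using B by (simp add: bilinear_form_def)
    show ?thesis
      by (simp add: eval2_sum klinear_sum[OF Bx] bilinear_form_scale_right[OF B] mult.commute)
  qed
  also have "\<dots> = eval2 B zs"
  proof (rule eval2_cong)
    fix x y assume "(x, y) \<in> set zs"
    then have "y \<in> vs.span (set bs)" using bs(2) by force
    then show "B x (\<Sum>b\<in>set bs. sc (\<phi> b y) b) = B x y"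
      by (simp add: biorthogonal_span_coordinates[OF bs(1)])
  qed
  finally show "eval2 B zs = eval2 B (map (\<lambda>b. (eval2 (\<lambda>x y. sc (\<phi> b y) x) zs, b)) bs)"
    by simp
qed

lemma span_eval2_scale_left:
  "eval2 (\<lambda>x y. sc (f x y) x) zs \<in> vs.span (fst ` set zs)"
proof (induct zs)
  case (Cons z zs)
  then show ?case
    by (cases z) (auto intro: vs.span_add vs.span_scale vs.span_base vs.span_mono[THEN subsetD, rotated])
qed (simp add: vs.span_zero)

lemma teq2_independent_right:
  obtains bs \<phi> X where "biorthogonal sc bs \<phi>" "set bs \<subseteq> snd ` set zs"
    "\<And>b. X b \<in> vs.span (fst ` set zs)" "teq2 sc zs (map (\<lambda>b. (X b, b)) bs)"
proof -
  obtain S where S: "S \<subseteq> snd ` set zs" "vs.independent S" "snd ` set zs \<subseteq> vs.span S"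
    by (rule vs.maximal_independent_subset)
  have "finite S" using S(1) finite_subset by blast
  then obtain bs where bs: "set bs = S" "distinct bs" using finite_distinct_list by blast
  obtain \<phi> where \<phi>: "biorthogonal sc bs \<phi>" using independent_biorthogonal S(2) bs by metis
  define X where "X b = eval2 (\<lambda>x y. sc (\<phi> b y) x) zs" for b
  have "teq2 sc zs (map (\<lambda>b. (X b, b)) bs)"
    unfolding X_def using S(3) bs(1) by (intro teq2_biorthogonal_expansion[OF \<phi>]) simp
  moreover have "X b \<in> vs.span (fst ` set zs)" for b
    unfolding X_def by (rule span_eval2_scale_left)
  ultimately show thesis using S(1) bs(1) by (intro that[OF \<phi>]) auto
qed

lemma teq2_independent_left:
  obtains es \<psi> Y where "biorthogonal sc es \<psi>" "set es \<subseteq> fst ` set zs"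
    "\<And>e. Y e \<in> vs.span (snd ` set zs)" "teq2 sc zs (map (\<lambda>e. (e, Y e)) es)"
proof -
  have fst_swap: "fst ` set (swap_tensor zs) = snd ` set zs"
    and snd_swap: "snd ` set (swap_tensor zs) = fst ` set zs"
    by (simp_all add: swap_tensor_def image_image)
  obtain bs \<phi> X where bs: "biorthogonal sc bs \<phi>" "set bs \<subseteq> snd ` set (swap_tensor zs)"
    "\<And>b. X b \<in> vs.span (fst ` set (swap_tensor zs))"
    "teq2 sc (swap_tensor zs) (map (\<lambda>b. (X b, b)) bs)"
    by (rule teq2_independent_right) (rule that)
  have "teq2 sc zs (map (\<lambda>b. (b, X b)) bs)"
    using teq2_swap_tensor[OF bs(4)] by (simp add: swap_tensor_def comp_def)
  from that[OF bs(1) _ _ this] bs(2,3) show thesis unfolding fst_swap snd_swap by blast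
qed

end

section \<open>Slopes\<close>

lemma Gam_slope_infinity_iff: "\<gamma> \<in> Gam_slope \<Gamma> \<infinity> \<longleftrightarrow> \<gamma> \<in> \<Gamma> \<and> fst \<gamma> = 0"
  and Gam_slope_ereal_iff: "\<gamma> \<in> Gam_slope \<Gamma> (ereal m) \<longleftrightarrow> \<gamma> \<in> \<Gamma> \<and> snd \<gamma> = m * fst \<gamma>"
  by (cases \<gamma>; simp add: Gam_slope_def)+

lemma Gam_le_subset: "Gam_le \<Gamma> \<mu> \<subseteq> \<Gamma>"
  by (auto simp: Gam_le_def Gam_slope_def)

lemma Gam_le_infinity: "Gam_le \<Gamma> \<infinity> = \<Gamma>"
proof (intro equalityI subsetI)
  fix \<gamma> assume \<gamma>: "\<gamma> \<in> \<Gamma>"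
  obtain r d where rd: "\<gamma> = (r, d)" by (cases \<gamma>)
  show "\<gamma> \<in> Gam_le \<Gamma> \<infinity>"
  proof (cases "r = 0")
    case True
    then have "\<gamma> \<in> Gam_slope \<Gamma> \<infinity>" using \<gamma> rd by (simp add: Gam_slope_def)
    then show ?thesis unfolding Gam_le_def by (intro UN_I[of \<infinity>]) auto
  next
    case False
    then have "\<gamma> \<in> Gam_slope \<Gamma> (ereal (d / r))" using \<gamma> rd by (simp add: Gam_slope_def)
    then show ?thesis unfolding Gam_le_def by (intro UN_I[of "ereal (d / r)"]) auto
  qed
qed (rule Gam_le_subset[THEN subsetD])

lemma Gam_le_ereal_iff:
  assumes "\<Gamma> \<subseteq> halfplane"
  shows "\<gamma> \<in> Gam_le \<Gamma> (ereal m) \<longleftrightarrow> \<gamma> \<in> \<Gamma> \<and> snd \<gamma> \<le> m * fst \<gamma>"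
proof -
  obtain r d where rd: "\<gamma> = (r, d)" by (cases \<gamma>)
  have halfplane: "r > 0 \<or> (r = 0 \<and> d \<ge> 0)" if "\<gamma> \<in> \<Gamma>"
    using that assms rd by (auto simp: halfplane_def)
  show ?thesis
  proof
    assume "\<gamma> \<in> Gam_le \<Gamma> (ereal m)"
    then obtain \<nu> where \<nu>: "\<nu> \<noteq> -\<infinity>" "\<nu> \<le> ereal m" "\<gamma> \<in> Gam_slope \<Gamma> \<nu>"
      by (auto simp: Gam_le_def)
    then obtain n where n: "\<nu> = ereal n" "n \<le> m" by (cases \<nu>) auto
    have "\<gamma> \<in> \<Gamma>" "d = n * r" using \<nu>(3) n rd by (auto simp: Gam_slope_def)
    moreover have "n * r \<le> m * r" using halfplane[OF \<open>\<gamma> \<in> \<Gamma>\<close>] n(2) by (auto intro: mult_right_mono)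
    ultimately show "\<gamma> \<in> \<Gamma> \<and> snd \<gamma> \<le> m * fst \<gamma>" using rd by simp
  next
    assume \<gamma>: "\<gamma> \<in> \<Gamma> \<and> snd \<gamma> \<le> m * fst \<gamma>"
    define n where "n = (if r = 0 then m else d / r)"
    have "\<gamma> \<in> Gam_slope \<Gamma> (ereal n)" "n \<le> m"
      using \<gamma> rd halfplane by (auto simp: n_def Gam_slope_def pos_divide_le_eq)
    then show "\<gamma> \<in> Gam_le \<Gamma> (ereal m)" unfolding Gam_le_def by (intro UN_I[of "ereal n"]) auto
  qed
qed

context
  fixes \<Gamma> :: "(real \<times> real) set" and \<mu> :: ereal
  assumes monoid: "discrete_submonoid \<Gamma>" and slope: "\<mu> \<noteq> -\<infinity>"
begin

private lemma slope_cases: obtains "\<mu> = \<infinity>" | m where "\<mu> = ereal m"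
  using slope by (cases \<mu>) auto

private lemma submonoid: "\<Gamma> \<subseteq> halfplane" "0 \<in> \<Gamma>" "\<beta> \<in> \<Gamma> \<Longrightarrow> \<gamma> \<in> \<Gamma> \<Longrightarrow> \<beta> + \<gamma> \<in> \<Gamma>"
  using monoid by (auto simp: discrete_submonoid_def)

private lemma fst_nonneg: "\<gamma> \<in> \<Gamma> \<Longrightarrow> fst \<gamma> \<ge> 0 \<and> (fst \<gamma> = 0 \<longrightarrow> snd \<gamma> \<ge> 0)"
  using submonoid(1) by (cases \<gamma>) (force simp: halfplane_def)

lemma zero_in_Gam_slope: "0 \<in> Gam_slope \<Gamma> \<mu>"
  by (cases rule: slope_cases) (simp_all add: Gam_slope_infinity_iff Gam_slope_ereal_iff submonoid)

lemma Gam_slope_add: "\<beta> \<in> Gam_slope \<Gamma> \<mu> \<Longrightarrow> \<gamma> \<in> Gam_slope \<Gamma> \<mu> \<Longrightarrow> \<beta> + \<gamma> \<in> Gam_slope \<Gamma> \<mu>"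
  by (cases rule: slope_cases)
    (simp_all add: Gam_slope_infinity_iff Gam_slope_ereal_iff submonoid distrib_left)

lemma Gam_le_add: "\<beta> \<in> Gam_le \<Gamma> \<mu> \<Longrightarrow> \<gamma> \<in> Gam_le \<Gamma> \<mu> \<Longrightarrow> \<beta> + \<gamma> \<in> Gam_le \<Gamma> \<mu>"
  by (cases rule: slope_cases)
    (simp_all add: Gam_le_infinity Gam_le_ereal_iff submonoid distrib_left add_mono)

lemma Gam_slope_subset_Gam_le: "Gam_slope \<Gamma> \<mu> \<subseteq> Gam_le \<Gamma> \<mu>"
  by (cases rule: slope_cases)
    (auto simp: Gam_le_infinity Gam_le_ereal_iff Gam_slope_infinity_iff Gam_slope_ereal_iff submonoid)

lemma Gam_slope_diff:
  "\<beta> + \<gamma> \<in> Gam_slope \<Gamma> \<mu> \<Longrightarrow> \<beta> \<in> Gam_slope \<Gamma> \<mu> \<Longrightarrow> \<gamma> \<in> \<Gamma> \<Longrightarrow> \<gamma> \<in> Gam_slope \<Gamma> \<mu>"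
  by (cases rule: slope_cases) (auto simp: Gam_slope_infinity_iff Gam_slope_ereal_iff algebra_simps)

lemma Gam_le_add_in_Gam_slope:
  assumes "\<beta> \<in> Gam_le \<Gamma> \<mu>" "\<gamma> \<in> Gam_le \<Gamma> \<mu>" "\<beta> + \<gamma> \<in> Gam_slope \<Gamma> \<mu>"
  shows "\<beta> \<in> Gam_slope \<Gamma> \<mu>"
proof (cases rule: slope_cases)
  case 1 then show ?thesis
    using assms fst_nonneg[of \<beta>] fst_nonneg[of \<gamma>]
    by (simp add: Gam_slope_infinity_iff Gam_le_infinity)
next
  case (2 m) then show ?thesis
    using assms submonoid(1) by (simp add: Gam_slope_ereal_iff Gam_le_ereal_iff algebra_simps)
qed

lemma Gam_slope_add_not_Gam_le:
  "\<beta> \<in> Gam_slope \<Gamma> \<mu> \<Longrightarrow> \<gamma> \<in> \<Gamma> \<Longrightarrow> \<gamma> \<notin> Gam_le \<Gamma> \<mu> \<Longrightarrow> \<beta> + \<gamma> \<notin> Gam_le \<Gamma> \<mu>"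
  by (cases rule: slope_cases)
    (auto simp: Gam_le_infinity Gam_le_ereal_iff Gam_slope_ereal_iff submonoid algebra_simps)

end

section \<open>Connected graded bialgebras\<close>

locale graded_bialgebra =
  fixes sc :: "'k::field \<Rightarrow> 'a::ring_1 \<Rightarrow> 'a"
    and \<Gamma> :: "(real \<times> real) set"
    and Agr :: "real \<times> real \<Rightarrow> 'a set"
    and \<Delta> :: "'a \<Rightarrow> ('a \<times> 'a) list"
    and \<epsilon> :: "'a \<Rightarrow> 'k"
  assumes connected_graded_bialgebra: "connected_graded_bialgebra sc \<Gamma> Agr \<Delta> \<epsilon>"

sublocale graded_bialgebra \<subseteq> k_algebra sc
  using connected_graded_bialgebra
  by (intro k_algebra_if_kalgebra) (simp add: connected_graded_bialgebra_def)

context graded_bialgebra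
begin

lemma discrete_submonoid: "discrete_submonoid \<Gamma>"
  and graded_decomp: "graded_decomp sc \<Gamma> Agr"
  and bialgebra: "bialgebra_on sc UNIV \<Delta> \<epsilon>"
  and Agr_0_eq: "Agr 0 = range (\<lambda>c. sc c 1)"
  using connected_graded_bialgebra by (simp_all add: connected_graded_bialgebra_def)

lemma Agr_mult: "x \<in> Agr \<beta> \<Longrightarrow> y \<in> Agr \<gamma> \<Longrightarrow> x * y \<in> Agr (\<beta> + \<gamma>)"
  using connected_graded_bialgebra unfolding connected_graded_bialgebra_def by (elim conjE) blast

lemma Delta_homogeneous: "a \<in> Agr \<gamma> \<Longrightarrow> \<exists>zs. teq2 sc (\<Delta> a) zs \<and>
    (\<forall>(x, y)\<in>set zs. \<exists>\<beta> \<beta>'. \<beta> + \<beta>' = \<gamma> \<and> x \<in> Agr \<beta> \<and> y \<in> Agr \<beta>')"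
  using connected_graded_bialgebra unfolding connected_graded_bialgebra_def by (elim conjE) blast

lemma counit_homogeneous: "\<gamma> \<noteq> 0 \<Longrightarrow> a \<in> Agr \<gamma> \<Longrightarrow> \<epsilon> a = 0"
  using connected_graded_bialgebra unfolding connected_graded_bialgebra_def by (elim conjE) blast

lemma monoid_add_closed: "\<beta> \<in> \<Gamma> \<Longrightarrow> \<gamma> \<in> \<Gamma> \<Longrightarrow> \<beta> + \<gamma> \<in> \<Gamma>"
  using discrete_submonoid by (simp add: discrete_submonoid_def)

lemma Delta_add: "teq2 sc (\<Delta> (x + y)) (\<Delta> x @ \<Delta> y)"
  and Delta_scale: "teq2 sc (\<Delta> (sc s x)) (map (\<lambda>(u, v). (sc s u, v)) (\<Delta> x))"
  and counit_add: "\<epsilon> (x + y) = \<epsilon> x + \<epsilon> y"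
  and counit_scale: "\<epsilon> (sc s x) = s * \<epsilon> x"
  and coassoc: "teq3 sc (cop_left \<Delta> (\<Delta> a)) (cop_right \<Delta> (\<Delta> a))"
  and counit_left: "sum_list (map (\<lambda>(x, y). sc (\<epsilon> x) y) (\<Delta> a)) = a"
  and counit_right: "sum_list (map (\<lambda>(x, y). sc (\<epsilon> y) x) (\<Delta> a)) = a"
  and Delta_mult: "teq2 sc (\<Delta> (x * y)) (tmult (\<Delta> x) (\<Delta> y))"
  and Delta_one: "teq2 sc (\<Delta> 1) [(1, 1)]"
  and counit_mult: "\<epsilon> (x * y) = \<epsilon> x * \<epsilon> y"
  and counit_one: "\<epsilon> 1 = 1"
  using bialgebra by (simp_all add: bialgebra_on_def)

lemma klinear_counit: "klinear sc \<epsilon>"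
  by (simp add: klinear_def counit_add counit_scale)

lemma klinear_eval2_Delta: "bilinear_form sc B \<Longrightarrow> klinear sc (\<lambda>x. eval2 B (\<Delta> x))"
  using Delta_add Delta_scale by (simp add: klinear_def teq2_iff_eval2 eval2_scale_left)

lemma bilinear_form_Delta_left:
  assumes "trilinear_form sc T"
  shows "bilinear_form sc (\<lambda>x y. eval2 (\<lambda>u v. T u v y) (\<Delta> x))"
proof -
  have "T u v (y + y') = T u v y + T u v y'" "T u v (sc c y) = c * T u v y" for u v y y' c
    using assms by (auto simp: trilinear_form_def klinear_def)
  then show ?thesis
    using klinear_eval2_Delta[OF trilinear_form_fix_third[OF assms]]
    by (simp add: bilinear_form_def klinear_def eval2_add eval2_mult_left)
qed

lemma bilinear_form_Delta_right:
  assumes "trilinear_form sc T"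
  shows "bilinear_form sc (\<lambda>x y. eval2 (\<lambda>u v. T x u v) (\<Delta> y))"
proof -
  have "T (x + x') = (\<lambda>u v. T x u v + T x' u v)" "T (sc c x) = (\<lambda>u v. c * T x u v)" for x x' c
    using assms by (auto simp: trilinear_form_def klinear_def fun_eq_iff)
  then show ?thesis
    using klinear_eval2_Delta[OF trilinear_form_fix_first[OF assms]]
    by (simp add: bilinear_form_def klinear_def eval2_add eval2_mult_left)
qed

lemma coassoc_eval2:
  assumes "teq2 sc (\<Delta> a) zs" "trilinear_form sc T"
  shows "eval2 (\<lambda>x y. eval2 (\<lambda>u v. T u v y) (\<Delta> x)) zs = eval2 (\<lambda>x y. eval2 (\<lambda>u v. T x u v) (\<Delta> y)) zs"
  using teq2D[OF assms(1) bilinear_form_Delta_left[OF assms(2)]]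
    teq2D[OF assms(1) bilinear_form_Delta_right[OF assms(2)]]
    teq3D[OF coassoc assms(2)]
  by (simp add: eval3_cop_left eval3_cop_right)

lemmas Agr_subspace = graded_decomp[unfolded graded_decomp_def, THEN conjunct1, THEN spec]
  and Agr_trivial = graded_decomp[unfolded graded_decomp_def, THEN conjunct2, THEN conjunct1, rule_format]
  and graded_decomp_unique = graded_decomp[unfolded graded_decomp_def, THEN conjunct2, THEN conjunct2, THEN spec]

lemma Agr_zero [simp]: "0 \<in> Agr \<gamma>"
  using Agr_subspace vs.subspace_0 by blast

lemma Agr_add: "x \<in> Agr \<gamma> \<Longrightarrow> y \<in> Agr \<gamma> \<Longrightarrow> x + y \<in> Agr \<gamma>"
  using Agr_subspace vs.subspace_add by blast

lemma Agr_span: "S \<subseteq> Agr \<gamma> \<Longrightarrow> vs.span S \<subseteq> Agr \<gamma>"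
  using Agr_subspace vs.span_minimal by blast

lemma Agr_scale: "x \<in> Agr \<gamma> \<Longrightarrow> sc c x \<in> Agr \<gamma>"
  using Agr_subspace vs.subspace_scale by blast

lemma one_in_Agr_0: "1 \<in> Agr 0"
  unfolding Agr_0_eq by (rule range_eqI[of _ _ 1]) simp

abbreviation hc :: "real \<times> real \<Rightarrow> 'a \<Rightarrow> 'a" where
  "hc \<gamma> x \<equiv> hcomp Agr x \<gamma>"

lemma hcomp_spec: "finite {\<gamma>. hc \<gamma> a \<noteq> 0} \<and> (\<forall>\<gamma>. hc \<gamma> a \<in> Agr \<gamma>) \<and> a = (\<Sum>\<gamma>\<in>{\<gamma>. hc \<gamma> a \<noteq> 0}. hc \<gamma> a)"
  unfolding hcomp_def by (rule theI'[OF graded_decomp_unique])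

lemma hcomp_in_Agr: "hc \<gamma> a \<in> Agr \<gamma>"
  using hcomp_spec by blast

lemma hcomp_unique:
  assumes "finite S" "\<And>\<gamma>. f \<gamma> \<in> Agr \<gamma>" "\<And>\<gamma>. \<gamma> \<notin> S \<Longrightarrow> f \<gamma> = 0" "a = (\<Sum>\<gamma>\<in>S. f \<gamma>)"
  shows "hcomp Agr a = f"
proof -
  have sub: "{\<gamma>. f \<gamma> \<noteq> 0} \<subseteq> S" using assms(3) by blast
  have "(\<Sum>\<gamma>\<in>S. f \<gamma>) = (\<Sum>\<gamma>\<in>{\<gamma>. f \<gamma> \<noteq> 0}. f \<gamma>)"
    by (rule sum.mono_neutral_right[OF assms(1) sub]) auto
  then have "finite {\<gamma>. f \<gamma> \<noteq> 0} \<and> (\<forall>\<gamma>. f \<gamma> \<in> Agr \<gamma>) \<and> a = (\<Sum>\<gamma>\<in>{\<gamma>. f \<gamma> \<noteq> 0}. f \<gamma>)"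
    using finite_subset[OF sub assms(1)] assms by auto
  then show ?thesis unfolding hcomp_def using the1_equality[OF graded_decomp_unique] by blast
qed

lemma sum_hcomp:
  assumes "finite S" "{\<gamma>. hc \<gamma> a \<noteq> 0} \<subseteq> S"
  shows "(\<Sum>\<gamma>\<in>S. hc \<gamma> a) = a"
proof -
  have "(\<Sum>\<gamma>\<in>{\<gamma>. hc \<gamma> a \<noteq> 0}. hc \<gamma> a) = (\<Sum>\<gamma>\<in>S. hc \<gamma> a)"
    by (rule sum.mono_neutral_left[OF assms]) auto
  then show ?thesis using hcomp_spec[of a] by simp
qed

lemma hcomp_add: "hc \<gamma> (x + y) = hc \<gamma> x + hc \<gamma> y"
proof -
  let ?S = "{\<gamma>. hc \<gamma> x \<noteq> 0} \<union> {\<gamma>. hc \<gamma> y \<noteq> 0}"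
  have S: "finite ?S" using hcomp_spec by auto
  have "hcomp Agr (x + y) = (\<lambda>\<gamma>. hc \<gamma> x + hc \<gamma> y)"
  proof (rule hcomp_unique[OF S])
    show "hc \<gamma> x + hc \<gamma> y \<in> Agr \<gamma>" for \<gamma> by (simp add: Agr_add hcomp_in_Agr)
    show "\<gamma> \<notin> ?S \<Longrightarrow> hc \<gamma> x + hc \<gamma> y = 0" for \<gamma> by simp
    show "x + y = (\<Sum>\<gamma>\<in>?S. hc \<gamma> x + hc \<gamma> y)"
      by (simp add: sum.distrib sum_hcomp[OF S])
  qed
  then show ?thesis by simp
qed

lemma hcomp_scale: "hc \<gamma> (sc c x) = sc c (hc \<gamma> x)"
proof -
  let ?S = "{\<gamma>. hc \<gamma> x \<noteq> 0}"
  have S: "finite ?S" using hcomp_spec by auto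
  have "hcomp Agr (sc c x) = (\<lambda>\<gamma>. sc c (hc \<gamma> x))"
  proof (rule hcomp_unique[OF S])
    show "sc c (hc \<gamma> x) \<in> Agr \<gamma>" for \<gamma> by (simp add: Agr_scale hcomp_in_Agr)
    show "\<gamma> \<notin> ?S \<Longrightarrow> sc c (hc \<gamma> x) = 0" for \<gamma> by simp
    show "sc c x = (\<Sum>\<gamma>\<in>?S. sc c (hc \<gamma> x))"
      by (simp add: vs.scale_sum_right[symmetric] sum_hcomp[OF S])
  qed
  then show ?thesis by simp
qed

lemma hcomp_homogeneous: "x \<in> Agr \<beta> \<Longrightarrow> hc \<gamma> x = (if \<gamma> = \<beta> then x else 0)"
proof -
  assume "x \<in> Agr \<beta>"
  then have "hcomp Agr x = (\<lambda>\<gamma>. if \<gamma> = \<beta> then x else 0)"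
    by (intro hcomp_unique[of "{\<beta>}"]) auto
  then show ?thesis by simp
qed

lemma klinear_endo_hcomp: "klinear_endo sc (hc \<gamma>)"
  by (simp add: klinear_endo_def hcomp_add hcomp_scale)

type_synonym 'b graded_tensor = "(((real \<times> real) \<times> (real \<times> real)) \<times> ('b \<times> 'b)) list"

definition graded_rep :: "real \<times> real \<Rightarrow> 'a graded_tensor \<Rightarrow> bool" where
  "graded_rep \<gamma> L \<longleftrightarrow> (\<forall>\<beta> \<beta>' x y. ((\<beta>, \<beta>'), (x, y)) \<in> set L \<longrightarrow>
     \<beta> + \<beta>' = \<gamma> \<and> x \<in> Agr \<beta> \<and> y \<in> Agr \<beta>' \<and> \<beta> \<in> \<Gamma> \<and> \<beta>' \<in> \<Gamma>)"

lemma graded_repD: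
  "graded_rep \<gamma> L \<Longrightarrow> ((\<beta>, \<beta>'), (x, y)) \<in> set L \<Longrightarrow>
     \<beta> + \<beta>' = \<gamma> \<and> x \<in> Agr \<beta> \<and> y \<in> Agr \<beta>' \<and> \<beta> \<in> \<Gamma> \<and> \<beta>' \<in> \<Gamma>"
  unfolding graded_rep_def by blast

lemma graded_rep_filter: "graded_rep \<gamma> L \<Longrightarrow> graded_rep \<gamma> (filter P L)"
  by (auto simp: graded_rep_def)

lemma graded_rep_exists:
  assumes "a \<in> Agr \<gamma>"
  obtains L where "graded_rep \<gamma> L" "teq2 sc (\<Delta> a) (map snd L)"
proof -
  obtain zs where zs: "teq2 sc (\<Delta> a) zs"
    and deg: "\<forall>(x, y)\<in>set zs. \<exists>\<beta> \<beta>'. \<beta> + \<beta>' = \<gamma> \<and> x \<in> Agr \<beta> \<and> y \<in> Agr \<beta>'"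
    using Delta_homogeneous[OF assms] by blast
  define P where "P z l \<longleftrightarrow> fst l + snd l = \<gamma> \<and> fst z \<in> Agr (fst l) \<and> snd z \<in> Agr (snd l)" for z l
  have P: "P z (SOME l. P z l)" if "z \<in> set zs" for z
  proof (rule someI_ex)
    obtain x y where "z = (x, y)" by (cases z)
    then show "\<exists>l. P z l" using deg that by (force simp: P_def)
  qed
  define L where "L = map (\<lambda>z. (SOME l. P z l, z)) (filter (\<lambda>(x, y). x \<noteq> 0 \<and> y \<noteq> 0) zs)"
  have "graded_rep \<gamma> L"
    unfolding graded_rep_def
  proof (intro allI impI)
    fix \<beta> \<beta>' x y assume "((\<beta>, \<beta>'), (x, y)) \<in> set L"
    then have "(x, y) \<in> set zs" "x \<noteq> 0" "y \<noteq> 0" "P (x, y) (\<beta>, \<beta>')"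
      using P by (auto simp: L_def)
    then show "\<beta> + \<beta>' = \<gamma> \<and> x \<in> Agr \<beta> \<and> y \<in> Agr \<beta>' \<and> \<beta> \<in> \<Gamma> \<and> \<beta>' \<in> \<Gamma>"
      using Agr_trivial[of \<beta>] Agr_trivial[of \<beta>'] by (auto simp: P_def)
  qed
  moreover have "teq2 sc (\<Delta> a) (map snd L)"
    using zs by (simp add: teq2_iff_eval2 L_def comp_def eval2_drop_zeros)
  ultimately show thesis by (rule that)
qed

lemma eval2_hcomp_Delta:
  assumes L: "graded_rep \<gamma> L" "teq2 sc (\<Delta> a) (map snd L)" and B: "bilinear_form sc B"
  shows "eval2 (\<lambda>x y. B (hc \<beta> x) (hc \<beta>' y)) (\<Delta> a) = eval2 B (label_block L (\<beta>, \<beta>'))"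
proof -
  have "eval2 (\<lambda>x y. B (hc \<beta> x) (hc \<beta>' y)) (map snd L) = eval2 B (label_block L (\<beta>, \<beta>'))"
  proof (rule eval2_label_block)
    fix l x y assume xy: "(l, (x, y)) \<in> set L"
    obtain m m' where l: "l = (m, m')" by (cases l)
    have "x \<in> Agr m" "y \<in> Agr m'" using graded_repD[OF L(1) xy[unfolded l]] by auto
    then show "B (hc \<beta> x) (hc \<beta>' y) = (if l = (\<beta>, \<beta>') then B x y else 0)"
      using l by (auto simp: hcomp_homogeneous bilinear_form_zero_left[OF B] bilinear_form_zero_right[OF B])
  qed
  then show ?thesis
    using teq2D[OF L(2) bilinear_form_compose[OF B klinear_endo_hcomp klinear_endo_hcomp]] by simp
qed

lemma Delta_component_eq_0:
  assumes "x \<in> Agr \<gamma>" "\<beta> + \<beta>' \<noteq> \<gamma>" "bilinear_form sc B"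
  shows "eval2 (\<lambda>u v. B (hc \<beta> u) (hc \<beta>' v)) (\<Delta> x) = 0"
proof -
  obtain L where L: "graded_rep \<gamma> L" "teq2 sc (\<Delta> x) (map snd L)"
    using graded_rep_exists[OF assms(1)] by blast
  have "label_block L (\<beta>, \<beta>') = []"
    using graded_repD[OF L(1)] assms(2) by (force simp: label_block_def filter_empty_conv)
  then show ?thesis using eval2_hcomp_Delta[OF L assms(3)] by simp
qed

lemma hcomp_notin: "\<gamma> \<notin> \<Gamma> \<Longrightarrow> hc \<gamma> x = 0"
  using hcomp_in_Agr[of x \<gamma>] Agr_trivial by auto

text \<open>As the labels of a graded representation add up to \<open>\<gamma>\<close>, the block of bidegree \<open>(\<beta>, \<beta>')\<close>
  is cut out by projecting the last factor to degree \<open>\<beta>'\<close> (resp. the first factor to degree \<open>\<beta>\<close>);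
  coassociativity moves this projection to the other side.\<close>

lemma coassoc_label_block_right:
  assumes L: "graded_rep \<gamma> L" "teq2 sc (\<Delta> a) (map snd L)" and "\<beta> + \<beta>' = \<gamma>"
    and T: "trilinear_form sc T"
  shows "eval2 (\<lambda>x y. eval2 (\<lambda>u v. T u v y) (\<Delta> x)) (label_block L (\<beta>, \<beta>'))
    = eval2 (\<lambda>x y. eval2 (\<lambda>u v. T x u (hc \<beta>' v)) (\<Delta> y)) (map snd L)"
proof -
  let ?T = "\<lambda>u v w. T u v (hc \<beta>' w)"
  have T': "trilinear_form sc ?T"
    by (rule trilinear_form_compose[OF T klinear_endo_id klinear_endo_id klinear_endo_hcomp])
  have "eval2 (\<lambda>x y. eval2 (\<lambda>u v. ?T u v y) (\<Delta> x)) (map snd L)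
      = eval2 (\<lambda>x y. eval2 (\<lambda>u v. T u v y) (\<Delta> x)) (label_block L (\<beta>, \<beta>'))"
  proof (rule eval2_label_block)
    fix l x y assume xy: "(l, (x, y)) \<in> set L"
    obtain m m' where l: "l = (m, m')" by (cases l)
    have "m + m' = \<gamma>" "y \<in> Agr m'" using graded_repD[OF L(1) xy[unfolded l]] by auto
    then show "eval2 (\<lambda>u v. ?T u v y) (\<Delta> x) = (if l = (\<beta>, \<beta>') then eval2 (\<lambda>u v. T u v y) (\<Delta> x) else 0)"
      using assms(3) l by (auto simp: hcomp_homogeneous trilinear_form_zero_third[OF T] intro: eval2_eq_0)
  qed
  then show ?thesis using coassoc_eval2[OF L(2) T'] by simp
qed

lemma coassoc_label_block_left:
  assumes L: "graded_rep \<gamma> L" "teq2 sc (\<Delta> a) (map snd L)" and "\<beta> + \<beta>' = \<gamma>"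
    and T: "trilinear_form sc T"
  shows "eval2 (\<lambda>x y. eval2 (\<lambda>u v. T x u v) (\<Delta> y)) (label_block L (\<beta>, \<beta>'))
    = eval2 (\<lambda>x y. eval2 (\<lambda>u v. T (hc \<beta> u) v y) (\<Delta> x)) (map snd L)"
proof -
  let ?T = "\<lambda>u v w. T (hc \<beta> u) v w"
  have T': "trilinear_form sc ?T"
    by (rule trilinear_form_compose[OF T klinear_endo_hcomp klinear_endo_id klinear_endo_id])
  have "eval2 (\<lambda>x y. eval2 (\<lambda>u v. ?T x u v) (\<Delta> y)) (map snd L)
      = eval2 (\<lambda>x y. eval2 (\<lambda>u v. T x u v) (\<Delta> y)) (label_block L (\<beta>, \<beta>'))"
  proof (rule eval2_label_block)
    fix l x y assume xy: "(l, (x, y)) \<in> set L"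
    obtain m m' where l: "l = (m, m')" by (cases l)
    have "m + m' = \<gamma>" "x \<in> Agr m" using graded_repD[OF L(1) xy[unfolded l]] by auto
    then show "eval2 (\<lambda>u v. ?T x u v) (\<Delta> y) = (if l = (\<beta>, \<beta>') then eval2 (\<lambda>u v. T x u v) (\<Delta> y) else 0)"
      using assms(3) l by (auto simp: hcomp_homogeneous trilinear_form_zero_first[OF T] intro: eval2_eq_0)
  qed
  then show ?thesis using coassoc_eval2[OF L(2) T'] by simp
qed

end

section \<open>Semistable elements and the coproduct \<open>\<Delta>\<^sub>\<mu>\<close>\<close>

locale slope_bialgebra = graded_bialgebra sc \<Gamma> Agr \<Delta> \<epsilon>
  for sc :: "'k::field \<Rightarrow> 'a::ring_1 \<Rightarrow> 'a" and \<Gamma> Agr \<Delta> \<epsilon> +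
  fixes \<mu> :: ereal
  assumes slope: "\<mu> \<noteq> -\<infinity>"
begin

abbreviation Gam_mu where "Gam_mu \<equiv> Gam_slope \<Gamma> \<mu>"
abbreviation Gam_le_mu where "Gam_le_mu \<equiv> Gam_le \<Gamma> \<mu>"
abbreviation p\<^sub>\<mu> where "p\<^sub>\<mu> \<equiv> proj_slope \<Gamma> Agr \<mu>"
abbreviation \<Delta>\<^sub>\<mu> where "\<Delta>\<^sub>\<mu> \<equiv> Delta_slope \<Gamma> Agr \<Delta> \<mu>"
abbreviation A\<^sub>s\<^sub>s where "A\<^sub>s\<^sub>s \<equiv> A_ss sc \<Gamma> Agr \<Delta> \<mu>"

lemmas zero_in_Gam_mu = zero_in_Gam_slope[OF discrete_submonoid slope]
  and Gam_mu_add = Gam_slope_add[OF discrete_submonoid slope]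
  and Gam_le_mu_add = Gam_le_add[OF discrete_submonoid slope]
  and Gam_mu_subset_Gam_le_mu = Gam_slope_subset_Gam_le[OF discrete_submonoid slope]
  and Gam_mu_diff = Gam_slope_diff[OF discrete_submonoid slope]
  and Gam_le_mu_add_in_Gam_mu = Gam_le_add_in_Gam_slope[OF discrete_submonoid slope]
  and Gam_mu_add_not_Gam_le_mu = Gam_slope_add_not_Gam_le[OF discrete_submonoid slope]

lemma proj_slope_eq_sum:
  "finite S \<Longrightarrow> {\<gamma>. hc \<gamma> x \<noteq> 0} \<subseteq> S \<Longrightarrow> p\<^sub>\<mu> x = (\<Sum>\<gamma>\<in>S \<inter> Gam_mu. hc \<gamma> x)"
  unfolding proj_slope_def by (rule sum.mono_neutral_left) auto

lemma proj_slope_add: "p\<^sub>\<mu> (x + y) = p\<^sub>\<mu> x + p\<^sub>\<mu> y"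
proof -
  let ?S = "{\<gamma>. hc \<gamma> x \<noteq> 0} \<union> {\<gamma>. hc \<gamma> y \<noteq> 0} \<union> {\<gamma>. hc \<gamma> (x + y) \<noteq> 0}"
  have S: "finite ?S" using hcomp_spec by auto
  have "p\<^sub>\<mu> x = (\<Sum>\<gamma>\<in>?S \<inter> Gam_mu. hc \<gamma> x)" "p\<^sub>\<mu> y = (\<Sum>\<gamma>\<in>?S \<inter> Gam_mu. hc \<gamma> y)"
    "p\<^sub>\<mu> (x + y) = (\<Sum>\<gamma>\<in>?S \<inter> Gam_mu. hc \<gamma> (x + y))"
    by (rule proj_slope_eq_sum[OF S]; blast)+
  then show ?thesis by (simp add: hcomp_add sum.distrib)
qed

lemma proj_slope_scale: "p\<^sub>\<mu> (sc c x) = sc c (p\<^sub>\<mu> x)"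
proof -
  let ?S = "{\<gamma>. hc \<gamma> x \<noteq> 0} \<union> {\<gamma>. hc \<gamma> (sc c x) \<noteq> 0}"
  have S: "finite ?S" using hcomp_spec by auto
  have "p\<^sub>\<mu> x = (\<Sum>\<gamma>\<in>?S \<inter> Gam_mu. hc \<gamma> x)" "p\<^sub>\<mu> (sc c x) = (\<Sum>\<gamma>\<in>?S \<inter> Gam_mu. hc \<gamma> (sc c x))"
    by (rule proj_slope_eq_sum[OF S]; blast)+
  then show ?thesis by (simp add: hcomp_scale vs.scale_sum_right)
qed

lemma klinear_endo_proj_slope: "klinear_endo sc p\<^sub>\<mu>"
  by (simp add: klinear_endo_def proj_slope_add proj_slope_scale)

lemma proj_slope_homogeneous:
  assumes "x \<in> Agr \<beta>"
  shows "p\<^sub>\<mu> x = (if \<beta> \<in> Gam_mu then x else 0)"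
proof -
  have "p\<^sub>\<mu> x = (\<Sum>\<gamma>\<in>{\<beta>} \<inter> Gam_mu. hc \<gamma> x)"
    by (rule proj_slope_eq_sum) (auto simp: hcomp_homogeneous[OF assms])
  then show ?thesis by (auto simp: hcomp_homogeneous[OF assms])
qed

lemma proj_slope_A_slope: "x \<in> A_slope sc \<Gamma> Agr \<mu> \<Longrightarrow> p\<^sub>\<mu> x = x"
  unfolding A_slope_def
proof (induct rule: vs.span_induct_alt)
  case base then show ?case using proj_slope_homogeneous[of 0 0] by simp
next
  case (step c x y)
  then obtain \<beta> where "\<beta> \<in> Gam_mu" "x \<in> Agr \<beta>" by auto
  then show ?case using step by (simp add: proj_slope_homogeneous proj_slope_add proj_slope_scale)
qed

lemma proj_slope_one: "p\<^sub>\<mu> 1 = 1"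
  using proj_slope_homogeneous[OF one_in_Agr_0] zero_in_Gam_mu by simp

lemma counit_proj_slope: "\<epsilon> (p\<^sub>\<mu> x) = \<epsilon> x"
proof -
  let ?S = "{\<gamma>. hc \<gamma> x \<noteq> 0}"
  have S: "finite ?S" using hcomp_spec by auto
  have "\<epsilon> x = \<epsilon> (\<Sum>\<gamma>\<in>?S. hc \<gamma> x)" using sum_hcomp[OF S] by simp
  also have "\<dots> = (\<Sum>\<gamma>\<in>?S. \<epsilon> (hc \<gamma> x))" by (rule klinear_sum[OF klinear_counit])
  also have "\<dots> = (\<Sum>\<gamma>\<in>?S \<inter> Gam_mu. \<epsilon> (hc \<gamma> x))"
  proof (rule sum.mono_neutral_right[OF S])
    show "\<forall>\<gamma>\<in>?S - ?S \<inter> Gam_mu. \<epsilon> (hc \<gamma> x) = 0"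
    proof
      fix \<gamma> assume "\<gamma> \<in> ?S - ?S \<inter> Gam_mu"
      then have "\<gamma> \<noteq> 0" using zero_in_Gam_mu by auto
      then show "\<epsilon> (hc \<gamma> x) = 0" by (rule counit_homogeneous[OF _ hcomp_in_Agr])
    qed
  qed auto
  also have "\<dots> = \<epsilon> (p\<^sub>\<mu> x)"
    by (simp add: proj_slope_eq_sum[OF S order_refl] klinear_sum[OF klinear_counit])
  finally show ?thesis by simp
qed

lemma eval2_Delta_slope: "eval2 B (\<Delta>\<^sub>\<mu> a) = eval2 (\<lambda>x y. B (p\<^sub>\<mu> x) (p\<^sub>\<mu> y)) (\<Delta> a)"
  unfolding Delta_slope_def by (rule eval2_map)

lemma klinear_eval2_Delta_slope: "bilinear_form sc B \<Longrightarrow> klinear sc (\<lambda>a. eval2 B (\<Delta>\<^sub>\<mu> a))"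
  unfolding eval2_Delta_slope
  by (rule klinear_eval2_Delta[OF bilinear_form_compose[OF _ klinear_endo_proj_slope klinear_endo_proj_slope]])

lemma Delta_slope_add: "teq2 sc (\<Delta>\<^sub>\<mu> (x + y)) (\<Delta>\<^sub>\<mu> x @ \<Delta>\<^sub>\<mu> y)"
  by (rule teq2I) (simp add: klinear_add[OF klinear_eval2_Delta_slope])

lemma Delta_slope_scale: "teq2 sc (\<Delta>\<^sub>\<mu> (sc s x)) (map (\<lambda>(u, v). (sc s u, v)) (\<Delta>\<^sub>\<mu> x))"
  by (rule teq2I) (simp add: klinear_scale[OF klinear_eval2_Delta_slope] eval2_scale_left)

lemma Delta_slope_zero: "teq2 sc (\<Delta>\<^sub>\<mu> 0) []"
  by (rule teq2I) (simp add: klinear_zero[OF klinear_eval2_Delta_slope])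

lemma Delta_slope_one: "teq2 sc (\<Delta>\<^sub>\<mu> 1) [(1, 1)]"
  using teq2_map[OF klinear_endo_proj_slope klinear_endo_proj_slope Delta_one]
  by (simp add: Delta_slope_def proj_slope_one)

lemma counit_Delta_slope:
  assumes "a \<in> A_slope sc \<Gamma> Agr \<mu>"
  shows "sum_list (map (\<lambda>(x, y). sc (\<epsilon> x) y) (\<Delta>\<^sub>\<mu> a)) = a"
    and "sum_list (map (\<lambda>(x, y). sc (\<epsilon> y) x) (\<Delta>\<^sub>\<mu> a)) = a"
proof -
  have commute: "eval2 F (\<Delta>\<^sub>\<mu> a) = p\<^sub>\<mu> (eval2 F (\<Delta> a))" if "\<And>x y. F (p\<^sub>\<mu> x) (p\<^sub>\<mu> y) = p\<^sub>\<mu> (F x y)" for F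
    using that by (simp add: eval2_Delta_slope klinear_endo_eval2[OF klinear_endo_proj_slope])
  show "sum_list (map (\<lambda>(x, y). sc (\<epsilon> x) y) (\<Delta>\<^sub>\<mu> a)) = a"
    using commute[of "\<lambda>x y. sc (\<epsilon> x) y"] counit_left[of a] proj_slope_A_slope[OF assms]
    by (simp add: eval2_def counit_proj_slope proj_slope_scale)
  show "sum_list (map (\<lambda>(x, y). sc (\<epsilon> y) x) (\<Delta>\<^sub>\<mu> a)) = a"
    using commute[of "\<lambda>x y. sc (\<epsilon> y) x"] counit_right[of a] proj_slope_A_slope[OF assms]
    by (simp add: eval2_def counit_proj_slope proj_slope_scale)
qed

lemma eval2_proj_slope_graded_rep:
  assumes "graded_rep \<gamma> L" "bilinear_form sc B"
  shows "eval2 (\<lambda>x y. B (p\<^sub>\<mu> x) (p\<^sub>\<mu> y)) (map snd L)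
    = eval2 B (map snd (filter (\<lambda>e. fst e \<in> Gam_mu \<times> Gam_mu) L))"
proof (rule eval2_filter_labels)
  fix l x y assume xy: "(l, (x, y)) \<in> set L"
  obtain m m' where l: "l = (m, m')" by (cases l)
  have "x \<in> Agr m" "y \<in> Agr m'" using graded_repD[OF assms(1) xy[unfolded l]] by auto
  then show "B (p\<^sub>\<mu> x) (p\<^sub>\<mu> y) = (if l \<in> Gam_mu \<times> Gam_mu then B x y else 0)"
    using l by (auto simp: proj_slope_homogeneous bilinear_form_zero_left[OF assms(2)]
        bilinear_form_zero_right[OF assms(2)])
qed

lemma Delta_slope_graded_rep:
  assumes "graded_rep \<gamma> L" "teq2 sc (\<Delta> a) (map snd L)"
  shows "teq2 sc (\<Delta>\<^sub>\<mu> a) (map snd (filter (\<lambda>e. fst e \<in> Gam_mu \<times> Gam_mu) L))"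
proof (rule teq2I)
  fix B assume B: "bilinear_form sc B"
  have "eval2 B (\<Delta>\<^sub>\<mu> a) = eval2 (\<lambda>x y. B (p\<^sub>\<mu> x) (p\<^sub>\<mu> y)) (map snd L)"
    unfolding eval2_Delta_slope
    by (rule teq2D[OF assms(2) bilinear_form_compose[OF B klinear_endo_proj_slope klinear_endo_proj_slope]])
  then show "eval2 B (\<Delta>\<^sub>\<mu> a) = eval2 B (map snd (filter (\<lambda>e. fst e \<in> Gam_mu \<times> Gam_mu) L))"
    using eval2_proj_slope_graded_rep[OF assms(1) B] by simp
qed

lemma Delta_slope_homogeneous_eq_0:
  assumes x: "x \<in> Agr \<gamma>" and \<gamma>: "\<gamma> \<notin> Gam_mu"
  shows "teq2 sc (\<Delta>\<^sub>\<mu> x) []"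
proof -
  obtain L where L: "graded_rep \<gamma> L" "teq2 sc (\<Delta> x) (map snd L)"
    using graded_rep_exists[OF x] by blast
  have "filter (\<lambda>e. fst e \<in> Gam_mu \<times> Gam_mu) L = []"
  proof (rule filter_False, rule ballI)
    fix e assume "e \<in> set L"
    moreover obtain m m' z where "e = ((m, m'), z)" by (metis prod.collapse)
    ultimately show "fst e \<notin> Gam_mu \<times> Gam_mu"
      using graded_repD[OF L(1)] \<gamma> Gam_mu_add by (cases z) fastforce
  qed
  then show ?thesis using Delta_slope_graded_rep[OF L] by simp
qed

lemma Delta_slope_proj_slope: "teq2 sc (\<Delta>\<^sub>\<mu> (p\<^sub>\<mu> x)) (\<Delta>\<^sub>\<mu> x)"
proof (rule teq2I)
  fix B assume B: "bilinear_form sc B"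
  let ?E = "\<lambda>w. eval2 B (\<Delta>\<^sub>\<mu> w)"
  let ?S = "{\<gamma>. hc \<gamma> x \<noteq> 0}"
  have S: "finite ?S" using hcomp_spec by auto
  have E: "klinear sc ?E" by (rule klinear_eval2_Delta_slope[OF B])
  have "?E x = ?E (\<Sum>\<gamma>\<in>?S. hc \<gamma> x)" using sum_hcomp[OF S] by simp
  also have "\<dots> = (\<Sum>\<gamma>\<in>?S. ?E (hc \<gamma> x))" by (rule klinear_sum[OF E])
  also have "\<dots> = (\<Sum>\<gamma>\<in>?S \<inter> Gam_mu. ?E (hc \<gamma> x))"
  proof (rule sum.mono_neutral_right[OF S])
    show "\<forall>\<gamma>\<in>?S - ?S \<inter> Gam_mu. ?E (hc \<gamma> x) = 0"
      using teq2D[OF Delta_slope_homogeneous_eq_0[OF hcomp_in_Agr] B] by auto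
  qed auto
  also have "\<dots> = ?E (p\<^sub>\<mu> x)"
    by (simp add: proj_slope_eq_sum[OF S order_refl] klinear_sum[OF E])
  finally show "?E (p\<^sub>\<mu> x) = ?E x" by simp
qed

lemma coassoc_Delta_slope: "teq3 sc (cop_left \<Delta>\<^sub>\<mu> (\<Delta>\<^sub>\<mu> a)) (cop_right \<Delta>\<^sub>\<mu> (\<Delta>\<^sub>\<mu> a))"
  unfolding teq3_iff_eval3
proof (intro allI impI)
  fix T assume T: "trilinear_form sc T"
  let ?T = "\<lambda>u v w. T (p\<^sub>\<mu> u) (p\<^sub>\<mu> v) (p\<^sub>\<mu> w)"
  have T': "trilinear_form sc ?T"
    by (rule trilinear_form_compose[OF T klinear_endo_proj_slope klinear_endo_proj_slope klinear_endo_proj_slope])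
  have "eval3 T (cop_left \<Delta>\<^sub>\<mu> (\<Delta>\<^sub>\<mu> a))
      = eval2 (\<lambda>x y. eval2 (\<lambda>u v. T u v (p\<^sub>\<mu> y)) (\<Delta>\<^sub>\<mu> (p\<^sub>\<mu> x))) (\<Delta> a)"
    by (simp add: eval3_cop_left eval2_Delta_slope[of _ a])
  also have "\<dots> = eval2 (\<lambda>x y. eval2 (\<lambda>u v. ?T u v y) (\<Delta> x)) (\<Delta> a)"
    using teq2D[OF Delta_slope_proj_slope trilinear_form_fix_third[OF T]]
    by (simp add: eval2_Delta_slope)
  also have "\<dots> = eval2 (\<lambda>x y. eval2 (\<lambda>u v. ?T x u v) (\<Delta> y)) (\<Delta> a)"
    by (rule coassoc_eval2[OF teq2_refl T'])
  also have "\<dots> = eval2 (\<lambda>x y. eval2 (\<lambda>u v. T (p\<^sub>\<mu> x) u v) (\<Delta>\<^sub>\<mu> (p\<^sub>\<mu> y))) (\<Delta> a)"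
    using teq2D[OF Delta_slope_proj_slope trilinear_form_fix_first[OF T]]
    by (simp add: eval2_Delta_slope)
  also have "\<dots> = eval3 T (cop_right \<Delta>\<^sub>\<mu> (\<Delta>\<^sub>\<mu> a))"
    by (simp add: eval3_cop_right eval2_Delta_slope[of _ a])
  finally show "eval3 T (cop_left \<Delta>\<^sub>\<mu> (\<Delta>\<^sub>\<mu> a)) = eval3 T (cop_right \<Delta>\<^sub>\<mu> (\<Delta>\<^sub>\<mu> a))" .
qed

abbreviation semistable_mu where "semistable_mu \<equiv> semistable sc \<Gamma> Agr \<Delta> \<mu>"

lemma semistable_iff:
  "semistable_mu a \<longleftrightarrow> (\<exists>\<gamma>\<in>Gam_mu. a \<in> Agr \<gamma>) \<and>
    (\<forall>\<beta> \<beta>' B. \<beta> \<notin> Gam_le_mu \<longrightarrow> bilinear_form sc B \<longrightarrow>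
       eval2 (\<lambda>x y. B (hc \<beta> x) (hc \<beta>' y)) (\<Delta> a) = 0)"
  unfolding semistable_def Lset_def teq2_iff_eval2 eval2_map by (simp add: subset_iff) blast

definition left_bounded_rep :: "real \<times> real \<Rightarrow> 'a \<Rightarrow> 'a graded_tensor \<Rightarrow> bool" where
  "left_bounded_rep \<gamma> a L \<longleftrightarrow> graded_rep \<gamma> L \<and> (\<forall>e\<in>set L. fst (fst e) \<in> Gam_le_mu) \<and>
     teq2 sc (\<Delta> a) (map snd L)"

lemma semistable_if_left_bounded_rep:
  assumes "a \<in> Agr \<gamma>" "\<gamma> \<in> Gam_mu" and L: "left_bounded_rep \<gamma> a L"
  shows "semistable_mu a"
  unfolding semistable_iff
proof (intro conjI allI impI bexI[of _ \<gamma>] assms(1,2))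
  fix \<beta> \<beta>' and B :: "'a \<Rightarrow> 'a \<Rightarrow> 'k" assume \<beta>: "\<beta> \<notin> Gam_le_mu" and B: "bilinear_form sc B"
  have L': "graded_rep \<gamma> L" "teq2 sc (\<Delta> a) (map snd L)" "\<forall>e\<in>set L. fst (fst e) \<in> Gam_le_mu"
    using L by (simp_all add: left_bounded_rep_def)
  have "eval2 (\<lambda>x y. B (hc \<beta> x) (hc \<beta>' y)) (\<Delta> a) = eval2 B (label_block L (\<beta>, \<beta>'))"
    by (rule eval2_hcomp_Delta[OF L'(1,2) B])
  also have "label_block L (\<beta>, \<beta>') = []"
    using L'(3) \<beta> by (force simp: label_block_def filter_empty_conv)
  finally show "eval2 (\<lambda>x y. B (hc \<beta> x) (hc \<beta>' y)) (\<Delta> a) = 0" by simp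
qed

text \<open>The terms of a homogeneous representation whose left degree is not in \<open>\<Gamma>\<^sub>\<le>\<^sub>\<mu>\<close> cancel
  for a semistable element, so they may be dropped.\<close>

lemma left_bounded_rep_exists:
  assumes ss: "semistable_mu a" and a: "a \<in> Agr \<gamma>"
  obtains L where "left_bounded_rep \<gamma> a L"
proof -
  obtain L where L: "graded_rep \<gamma> L" "teq2 sc (\<Delta> a) (map snd L)"
    using graded_rep_exists[OF a] by blast
  define L' where "L' = filter (\<lambda>e. fst (fst e) \<in> Gam_le_mu) L"
  define L'' where "L'' = filter (\<lambda>e. fst (fst e) \<notin> Gam_le_mu) L"
  have "teq2 sc (\<Delta> a) (map snd L')"
  proof (rule teq2I)
    fix B :: "'a \<Rightarrow> 'a \<Rightarrow> 'k" assume B: "bilinear_form sc B"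
    have "eval2 B (label_block L'' l) = 0" if l: "l \<in> fst ` set L''" for l
    proof -
      obtain \<beta> \<beta>' where l': "l = (\<beta>, \<beta>')" by (cases l)
      have \<beta>: "\<beta> \<notin> Gam_le_mu" using l l' by (auto simp: L''_def)
      then have "label_block L'' l = label_block L (\<beta>, \<beta>')"
        unfolding L''_def label_block_def l' filter_filter
        by (intro arg_cong[where f = "map snd"] filter_cong) auto
      also have "eval2 B \<dots> = eval2 (\<lambda>x y. B (hc \<beta> x) (hc \<beta>' y)) (\<Delta> a)"
        by (rule eval2_hcomp_Delta[OF L B, symmetric])
      also have "\<dots> = 0" using ss \<beta> B unfolding semistable_iff by blast
      finally show ?thesis .
    qed
    then have "eval2 B (map snd L'') = 0" by (simp add: eval2_group_labels)
    moreover have "eval2 B (map snd L) = eval2 B (map snd L') + eval2 B (map snd L'')"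
      unfolding L'_def L''_def by (induct L) auto
    ultimately show "eval2 B (\<Delta> a) = eval2 B (map snd L')" using teq2D[OF L(2) B] by simp
  qed
  then have "left_bounded_rep \<gamma> a L'"
    using L(1) by (simp add: left_bounded_rep_def graded_rep_filter L'_def)
  then show thesis by (rule that)
qed

lemma graded_rep_rep_mult:
  assumes L: "graded_rep \<gamma> L" and M: "graded_rep \<gamma>' M"
  shows "graded_rep (\<gamma> + \<gamma>') (rep_mult L M)"
  unfolding graded_rep_def
proof (intro allI impI)
  fix \<beta> \<beta>' z w assume "((\<beta>, \<beta>'), (z, w)) \<in> set (rep_mult L M)"
  then obtain l x y m u v where lm: "(l, (x, y)) \<in> set L" "(m, (u, v)) \<in> set M"
    and eq: "((\<beta>, \<beta>'), (z, w)) = (l + m, (x * u, y * v))"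
    unfolding set_rep_mult by blast
  obtain l1 l2 where l: "l = (l1, l2)" by (cases l)
  obtain m1 m2 where m: "m = (m1, m2)" by (cases m)
  have "l1 + l2 = \<gamma> \<and> x \<in> Agr l1 \<and> y \<in> Agr l2 \<and> l1 \<in> \<Gamma> \<and> l2 \<in> \<Gamma>"
    using graded_repD[OF L lm(1)[unfolded l]] .
  moreover have "m1 + m2 = \<gamma>' \<and> u \<in> Agr m1 \<and> v \<in> Agr m2 \<and> m1 \<in> \<Gamma> \<and> m2 \<in> \<Gamma>"
    using graded_repD[OF M lm(2)[unfolded m]] .
  ultimately show "\<beta> + \<beta>' = \<gamma> + \<gamma>' \<and> z \<in> Agr \<beta> \<and> w \<in> Agr \<beta>' \<and> \<beta> \<in> \<Gamma> \<and> \<beta>' \<in> \<Gamma>"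
    using eq l m by (auto simp: Agr_mult monoid_add_closed add_ac)
qed

lemma left_bounded_rep_mult:
  assumes L: "left_bounded_rep \<gamma> x L" and M: "left_bounded_rep \<gamma>' y M"
  shows "left_bounded_rep (\<gamma> + \<gamma>') (x * y) (rep_mult L M)"
proof -
  have "graded_rep (\<gamma> + \<gamma>') (rep_mult L M)"
    using L M by (intro graded_rep_rep_mult) (simp_all add: left_bounded_rep_def)
  moreover have "fst (fst e) \<in> Gam_le_mu" if e_in: "e \<in> set (rep_mult L M)" for e
  proof -
    obtain l x y m u v where lm: "(l, (x, y)) \<in> set L" "(m, (u, v)) \<in> set M"
      and e: "e = (l + m, (x * u, y * v))"
      using e_in unfolding set_rep_mult by blast
    have "fst l \<in> Gam_le_mu" "fst m \<in> Gam_le_mu"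
      using lm L M unfolding left_bounded_rep_def by force+
    then show ?thesis using e by (simp add: Gam_le_mu_add)
  qed
  moreover have "teq2 sc (\<Delta> (x * y)) (map snd (rep_mult L M))"
    unfolding map_snd_rep_mult using L M
    by (intro teq2_trans[OF Delta_mult teq2_tmult]) (simp_all add: left_bounded_rep_def)
  ultimately show ?thesis by (simp add: left_bounded_rep_def)
qed

lemma semistable_mult:
  assumes x: "semistable_mu x" and y: "semistable_mu y"
  shows "semistable_mu (x * y)"
proof -
  obtain \<gamma> \<gamma>' where \<gamma>: "\<gamma> \<in> Gam_mu" "x \<in> Agr \<gamma>" "\<gamma>' \<in> Gam_mu" "y \<in> Agr \<gamma>'"
    using x y by (auto simp: semistable_def)
  obtain L M where "left_bounded_rep \<gamma> x L" "left_bounded_rep \<gamma>' y M"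
    using left_bounded_rep_exists x y \<gamma> by metis
  then show ?thesis
    using semistable_if_left_bounded_rep[OF Agr_mult[OF \<gamma>(2,4)] Gam_mu_add[OF \<gamma>(1,3)]]
      left_bounded_rep_mult by blast
qed

lemma semistable_one: "semistable_mu 1"
proof (rule semistable_if_left_bounded_rep[OF one_in_Agr_0 zero_in_Gam_mu])
  show "left_bounded_rep 0 1 [((0, 0), (1, 1))]"
    using one_in_Agr_0 Gam_mu_subset_Gam_le_mu zero_in_Gam_mu Delta_one discrete_submonoid
    by (auto simp: left_bounded_rep_def graded_rep_def discrete_submonoid_def)
qed

lemma A_ss_subset_A_slope: "A\<^sub>s\<^sub>s \<subseteq> A_slope sc \<Gamma> Agr \<mu>"
  unfolding A_ss_def A_slope_def by (rule vs.span_mono) (auto simp: semistable_def)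

lemma subspace_A_ss: "vs.subspace A\<^sub>s\<^sub>s"
  unfolding A_ss_def by (rule vs.subspace_span)

lemma semistable_in_A_ss: "semistable_mu a \<Longrightarrow> a \<in> A\<^sub>s\<^sub>s"
  unfolding A_ss_def by (rule vs.span_base) simp

lemma one_in_A_ss: "1 \<in> A\<^sub>s\<^sub>s"
  by (rule semistable_in_A_ss[OF semistable_one])

lemma mult_in_A_ss:
  assumes "x \<in> A\<^sub>s\<^sub>s" "y \<in> A\<^sub>s\<^sub>s"
  shows "x * y \<in> A\<^sub>s\<^sub>s"
proof -
  have semistable_left: "s * y \<in> A\<^sub>s\<^sub>s" if s: "semistable_mu s" for s
    using assms(2) unfolding A_ss_def
  proof (induct rule: vs.span_induct_alt)
    case (step c t z)
    then show ?case
      using semistable_mult[OF s] by (simp add: distrib_left scale_mult_right[symmetric]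
          vs.span_add vs.span_scale vs.span_base)
  qed (simp add: vs.span_zero)
  show ?thesis
    using assms(1) unfolding A_ss_def
  proof (induct rule: vs.span_induct_alt)
    case (step c s z)
    then show ?case
      using semistable_left[of s]
      by (simp add: distrib_right scale_mult_left[symmetric] vs.span_add vs.span_scale A_ss_def)
  qed (simp add: vs.span_zero)
qed

text \<open>Left degrees lie in \<open>\<Gamma>\<^sub>\<le>\<^sub>\<mu>\<close> and total degrees in \<open>\<Gamma>\<^sub>\<mu>\<close>, so a product of two terms has
  both degrees of slope \<open>\<mu>\<close> exactly when each factor has.\<close>

lemma slope_labels_add_iff:
  assumes L: "left_bounded_rep \<gamma> x L" and M: "left_bounded_rep \<gamma>' y M"
    and \<gamma>: "\<gamma> \<in> Gam_mu" "\<gamma>' \<in> Gam_mu"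
    and lm: "(l, (x', y')) \<in> set L" "(m, (u, v)) \<in> set M"
  shows "l + m \<in> Gam_mu \<times> Gam_mu \<longleftrightarrow> l \<in> Gam_mu \<times> Gam_mu \<and> m \<in> Gam_mu \<times> Gam_mu"
proof -
  obtain l1 l2 where l: "l = (l1, l2)" by (cases l)
  obtain m1 m2 where m: "m = (m1, m2)" by (cases m)
  have l': "l1 + l2 = \<gamma>" "l2 \<in> \<Gamma>" "l1 \<in> Gam_le_mu"
    using L lm(1) graded_repD[of \<gamma> L l1 l2 x' y'] l by (force simp: left_bounded_rep_def)+
  have m': "m1 + m2 = \<gamma>'" "m2 \<in> \<Gamma>" "m1 \<in> Gam_le_mu"
    using M lm(2) graded_repD[of \<gamma>' M m1 m2 u v] m by (force simp: left_bounded_rep_def)+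
  show ?thesis
  proof
    assume "l + m \<in> Gam_mu \<times> Gam_mu"
    then have "l1 + m1 \<in> Gam_mu" using l m by simp
    then have "l1 \<in> Gam_mu" "m1 \<in> Gam_mu"
      using Gam_le_mu_add_in_Gam_mu[OF l'(3) m'(3)] Gam_le_mu_add_in_Gam_mu[OF m'(3) l'(3)]
      by (simp_all add: add.commute)
    then show "l \<in> Gam_mu \<times> Gam_mu \<and> m \<in> Gam_mu \<times> Gam_mu"
      using Gam_mu_diff[of l1 l2] Gam_mu_diff[of m1 m2] l l' m m' \<gamma> by simp
  qed (use l m Gam_mu_add in auto)
qed

lemma Delta_slope_mult_semistable:
  assumes x: "semistable_mu x" and y: "semistable_mu y"
  shows "teq2 sc (\<Delta>\<^sub>\<mu> (x * y)) (tmult (\<Delta>\<^sub>\<mu> x) (\<Delta>\<^sub>\<mu> y))"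
proof -
  let ?P = "\<lambda>l. l \<in> Gam_mu \<times> Gam_mu"
  obtain \<gamma> \<gamma>' where \<gamma>: "\<gamma> \<in> Gam_mu" "x \<in> Agr \<gamma>" "\<gamma>' \<in> Gam_mu" "y \<in> Agr \<gamma>'"
    using x y by (auto simp: semistable_def)
  obtain L M where L: "left_bounded_rep \<gamma> x L" and M: "left_bounded_rep \<gamma>' y M"
    using left_bounded_rep_exists x y \<gamma> by metis
  have L': "graded_rep \<gamma> L" "teq2 sc (\<Delta> x) (map snd L)"
    and M': "graded_rep \<gamma>' M" "teq2 sc (\<Delta> y) (map snd M)"
    and LM: "graded_rep (\<gamma> + \<gamma>') (rep_mult L M)" "teq2 sc (\<Delta> (x * y)) (map snd (rep_mult L M))"
    using L M left_bounded_rep_mult[OF L M] by (simp_all add: left_bounded_rep_def)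
  have "teq2 sc (\<Delta>\<^sub>\<mu> (x * y)) (map snd (filter (\<lambda>e. ?P (fst e)) (rep_mult L M)))"
    by (rule Delta_slope_graded_rep[OF LM])
  also have "filter (\<lambda>e. ?P (fst e)) (rep_mult L M)
      = rep_mult (filter (\<lambda>e. ?P (fst e)) L) (filter (\<lambda>e. ?P (fst e)) M)"
    by (rule filter_rep_mult) (rule slope_labels_add_iff[OF L M \<gamma>(1,3)])
  finally show ?thesis
    unfolding map_snd_rep_mult
    using teq2_tmult[OF Delta_slope_graded_rep[OF L'] Delta_slope_graded_rep[OF M']]
    by (rule teq2_trans[OF _ teq2_sym])
qed

lemma Delta_slope_mult:
  assumes x: "x \<in> A\<^sub>s\<^sub>s" and y: "y \<in> A\<^sub>s\<^sub>s"
  shows "teq2 sc (\<Delta>\<^sub>\<mu> (x * y)) (tmult (\<Delta>\<^sub>\<mu> x) (\<Delta>\<^sub>\<mu> y))"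
proof (rule teq2I)
  fix B assume B: "bilinear_form sc B"
  let ?F = "\<lambda>x y. eval2 B (\<Delta>\<^sub>\<mu> (x * y))" and ?G = "\<lambda>x y. eval2 B (tmult (\<Delta>\<^sub>\<mu> x) (\<Delta>\<^sub>\<mu> y))"
  have F: "klinear sc (?F x)" "klinear sc (\<lambda>x. ?F x y)" for x y
    by (rule klinear_compose[OF klinear_eval2_Delta_slope[OF B]];
        rule klinear_endo_mult_left klinear_endo_mult_right)+
  have G1: "?G x y = eval2 (\<lambda>u v. eval2 (\<lambda>a b. B (a * u) (b * v)) (\<Delta>\<^sub>\<mu> x)) (\<Delta>\<^sub>\<mu> y)"
    and G2: "?G x y = eval2 (\<lambda>a b. eval2 (\<lambda>u v. B (a * u) (b * v)) (\<Delta>\<^sub>\<mu> y)) (\<Delta>\<^sub>\<mu> x)" for x y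
    unfolding eval2_tmult by (rule eval2_swap refl)+
  have bil: "bilinear_form sc (\<lambda>u v. eval2 (\<lambda>a b. B (a * u) (b * v)) W)"
    "bilinear_form sc (\<lambda>a b. eval2 (\<lambda>u v. B (a * u) (b * v)) W)" for W
    by (rule bilinear_form_eval2_right, rule bilinear_form_compose[OF B];
        rule klinear_endo_mult_left klinear_endo_mult_right)+
  have G1_linear: "klinear sc (?G x)" for x
    unfolding G1 by (rule klinear_eval2_Delta_slope[OF bil(1)])
  have G2_linear: "klinear sc (\<lambda>x. ?G x y)" for y
    unfolding G2 by (rule klinear_eval2_Delta_slope[OF bil(2)])
  have "?F s t = ?G s t" if "semistable_mu s" "semistable_mu t" for s t
    using teq2D[OF Delta_slope_mult_semistable[OF that] B] .
  then have "?F s y = ?G s y" if "semistable_mu s" for s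
    using klinear_eq_on_span[OF F(1) G1_linear _ y[unfolded A_ss_def]] that by blast
  then show "?F x y = ?G x y"
    using klinear_eq_on_span[OF F(2) G2_linear _ x[unfolded A_ss_def]] by blast
qed

text \<open>Testing coassociativity against \<open>B(x\<^sub>\<beta>\<^sub>1, y\<^sub>\<beta>\<^sub>2) \<phi>\<^sub>b(z)\<close> with \<open>\<beta>\<^sub>1 \<notin> \<Gamma>\<^sub>\<le>\<^sub>\<mu>\<close> isolates
  the \<open>(\<beta>\<^sub>1, \<beta>\<^sub>2)\<close> component of \<open>\<Delta> (X b)\<close> on one side, while on the other side every first
  factor has degree in \<open>\<Gamma>\<^sub>\<le>\<^sub>\<mu>\<close>.\<close>

lemma semistable_left_factor:
  assumes L: "left_bounded_rep \<gamma> a L" and \<beta>: "\<beta> + \<beta>' = \<gamma>" "\<beta> \<in> Gam_mu"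
    and X: "teq2 sc (label_block L (\<beta>, \<beta>')) (map (\<lambda>b. (X b, b)) bs)" "X b \<in> Agr \<beta>"
    and bs: "biorthogonal sc bs \<phi>" "b \<in> set bs"
  shows "semistable_mu (X b)"
  unfolding semistable_iff
proof (intro conjI allI impI bexI[of _ \<beta>])
  show "X b \<in> Agr \<beta>" "\<beta> \<in> Gam_mu" by (fact X(2) \<beta>(2))+
  fix \<beta>\<^sub>1 \<beta>\<^sub>2 and B :: "'a \<Rightarrow> 'a \<Rightarrow> 'k" assume \<beta>\<^sub>1: "\<beta>\<^sub>1 \<notin> Gam_le_mu" and B: "bilinear_form sc B"
  let ?B = "\<lambda>u v. B (hc \<beta>\<^sub>1 u) (hc \<beta>\<^sub>2 v)"
  let ?T = "\<lambda>u v w. ?B u v * \<phi> b w"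
  have T: "trilinear_form sc ?T"
    using bs by (intro trilinear_form_bilinear_times bilinear_form_compose[OF B] klinear_endo_hcomp)
      (simp add: biorthogonal_def)
  have L': "graded_rep \<gamma> L" "teq2 sc (\<Delta> a) (map snd L)" "\<forall>e\<in>set L. fst (fst e) \<in> Gam_le_mu"
    using L by (simp_all add: left_bounded_rep_def)
  have "eval2 ?B (\<Delta> (X b)) = (\<Sum>b'\<leftarrow>bs. eval2 ?B (\<Delta> (X b')) * \<phi> b b')"
    by (rule biorthogonal_sum_list[OF bs, symmetric])
  also have "\<dots> = eval2 (\<lambda>x y. eval2 (\<lambda>u v. ?T u v y) (\<Delta> x)) (map (\<lambda>b. (X b, b)) bs)"
    by (simp add: eval2_graph_left eval2_mult_right)
  also have "\<dots> = eval2 (\<lambda>x y. eval2 (\<lambda>u v. ?T u v y) (\<Delta> x)) (label_block L (\<beta>, \<beta>'))"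
    by (rule teq2D[OF X(1) bilinear_form_Delta_left[OF T], symmetric])
  also have "\<dots> = eval2 (\<lambda>x y. eval2 (\<lambda>u v. ?T x u (hc \<beta>' v)) (\<Delta> y)) (map snd L)"
    by (rule coassoc_label_block_right[OF L'(1,2) \<beta>(1) T])
  also have "\<dots> = 0"
  proof (rule eval2_eq_0)
    fix x y assume "(x, y) \<in> set (map snd L)"
    then obtain m m' where xy: "((m, m'), (x, y)) \<in> set L" by force
    then have "x \<in> Agr m" "m \<in> Gam_le_mu" using graded_repD[OF L'(1) xy] L'(3) by force+
    then have "hc \<beta>\<^sub>1 x = 0" using \<beta>\<^sub>1 hcomp_homogeneous by auto
    then show "eval2 (\<lambda>u v. ?T x u (hc \<beta>' v)) (\<Delta> y) = 0"
      by (intro eval2_eq_0) (simp add: bilinear_form_zero_left[OF B])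
  qed
  finally show "eval2 ?B (\<Delta> (X b)) = 0" .
qed

lemma Delta_component_slope_eq_0:
  assumes "x \<in> Agr m" "m \<in> Gam_le_mu" "\<beta> \<in> Gam_mu" "\<beta>' \<notin> Gam_le_mu" "bilinear_form sc B"
  shows "eval2 (\<lambda>u v. B (hc \<beta> u) (hc \<beta>' v)) (\<Delta> x) = 0"
proof (cases "\<beta>' \<in> \<Gamma>")
  case True
  then have "\<beta> + \<beta>' \<noteq> m" using Gam_mu_add_not_Gam_le_mu[OF assms(3) True assms(4)] assms(2) by auto
  then show ?thesis by (rule Delta_component_eq_0[OF assms(1) _ assms(5)])
next
  case False
  then show ?thesis by (intro eval2_eq_0) (simp add: hcomp_notin bilinear_form_zero_right[OF assms(5)])
qed

text \<open>Symmetrically, testing against \<open>\<psi>\<^sub>e(x) B(y\<^sub>\<beta>\<^sub>2, z\<^sub>\<beta>\<^sub>3)\<close> isolates a component of \<open>\<Delta> (Y e)\<close>;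
  on the other side only \<open>(\<beta>, \<beta>\<^sub>2)\<close> components of \<open>\<Delta> x\<close> with \<open>x\<close> of degree in \<open>\<Gamma>\<^sub>\<le>\<^sub>\<mu>\<close> occur,
  and these vanish.\<close>

lemma semistable_right_factor:
  assumes L: "left_bounded_rep \<gamma> a L" and \<beta>: "\<beta> + \<beta>' = \<gamma>" "\<beta> \<in> Gam_mu" "\<beta>' \<in> Gam_mu"
    and Y: "teq2 sc (label_block L (\<beta>, \<beta>')) (map (\<lambda>e. (e, Y e)) es)" "Y e \<in> Agr \<beta>'"
    and es: "biorthogonal sc es \<psi>" "e \<in> set es"
  shows "semistable_mu (Y e)"
  unfolding semistable_iff
proof (intro conjI allI impI bexI[of _ \<beta>'])
  show "Y e \<in> Agr \<beta>'" "\<beta>' \<in> Gam_mu" by (fact Y(2) \<beta>(3))+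
  fix \<beta>\<^sub>2 \<beta>\<^sub>3 and B :: "'a \<Rightarrow> 'a \<Rightarrow> 'k" assume \<beta>\<^sub>2: "\<beta>\<^sub>2 \<notin> Gam_le_mu" and B: "bilinear_form sc B"
  let ?B = "\<lambda>v w. B (hc \<beta>\<^sub>2 v) (hc \<beta>\<^sub>3 w)"
  let ?T = "\<lambda>u v w. \<psi> e u * ?B v w"
  have \<psi>: "klinear sc (\<psi> e)" using es by (simp add: biorthogonal_def)
  have T: "trilinear_form sc ?T"
    by (intro trilinear_form_times_bilinear[OF _ \<psi>] bilinear_form_compose[OF B] klinear_endo_hcomp)
  have L': "graded_rep \<gamma> L" "teq2 sc (\<Delta> a) (map snd L)" "\<forall>e\<in>set L. fst (fst e) \<in> Gam_le_mu"
    using L by (simp_all add: left_bounded_rep_def)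
  have "eval2 ?B (\<Delta> (Y e)) = (\<Sum>e'\<leftarrow>es. eval2 ?B (\<Delta> (Y e')) * \<psi> e e')"
    by (rule biorthogonal_sum_list[OF es, symmetric])
  also have "\<dots> = eval2 (\<lambda>x y. eval2 (\<lambda>u v. ?T x u v) (\<Delta> y)) (map (\<lambda>e. (e, Y e)) es)"
    by (simp add: eval2_graph_right eval2_mult_left mult.commute)
  also have "\<dots> = eval2 (\<lambda>x y. eval2 (\<lambda>u v. ?T x u v) (\<Delta> y)) (label_block L (\<beta>, \<beta>'))"
    by (rule teq2D[OF Y(1) bilinear_form_Delta_right[OF T], symmetric])
  also have "\<dots> = eval2 (\<lambda>x y. eval2 (\<lambda>u v. ?T (hc \<beta> u) v y) (\<Delta> x)) (map snd L)"
    by (rule coassoc_label_block_left[OF L'(1,2) \<beta>(1) T])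
  also have "\<dots> = 0"
  proof (rule eval2_eq_0)
    fix x y assume "(x, y) \<in> set (map snd L)"
    then obtain m m' where xy: "((m, m'), (x, y)) \<in> set L" by force
    then have "x \<in> Agr m" "m \<in> Gam_le_mu" using graded_repD[OF L'(1) xy] L'(3) by force+
    moreover have "bilinear_form sc (\<lambda>u v. \<psi> e u * B v (hc \<beta>\<^sub>3 y))"
      using \<psi> B by (simp add: bilinear_form_def klinear_def algebra_simps)
    ultimately show "eval2 (\<lambda>u v. ?T (hc \<beta> u) v y) (\<Delta> x) = 0"
      using Delta_component_slope_eq_0[OF _ _ \<beta>(2) \<beta>\<^sub>2] by blast
  qed
  finally show "eval2 ?B (\<Delta> (Y e)) = 0" .
qed

lemma label_block_in_A_ss:
  assumes L: "left_bounded_rep \<gamma> a L" and l: "l \<in> fst ` set L" "l \<in> Gam_mu \<times> Gam_mu"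
  obtains zs where "set zs \<subseteq> A\<^sub>s\<^sub>s \<times> A\<^sub>s\<^sub>s" "teq2 sc (label_block L l) zs"
proof -
  obtain \<beta> \<beta>' where l': "l = (\<beta>, \<beta>')" by (cases l)
  have L': "graded_rep \<gamma> L" using L by (simp add: left_bounded_rep_def)
  have \<beta>: "\<beta> + \<beta>' = \<gamma>" "\<beta> \<in> Gam_mu" "\<beta>' \<in> Gam_mu"
    using l l' graded_repD[OF L'] by force+
  let ?t = "label_block L (\<beta>, \<beta>')"
  have t: "fst ` set ?t \<subseteq> Agr \<beta>" "snd ` set ?t \<subseteq> Agr \<beta>'"
    using graded_repD[OF L'] by (force simp: label_block_def)+
  obtain bs \<phi> X where X: "biorthogonal sc bs \<phi>" "set bs \<subseteq> snd ` set ?t"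
    "\<And>b. X b \<in> vs.span (fst ` set ?t)" "teq2 sc ?t (map (\<lambda>b. (X b, b)) bs)"
    by (rule teq2_independent_right) (rule that)
  have X_ss: "semistable_mu (X b)" if "b \<in> set bs" for b
    using X(3) Agr_span[OF t(1)]
    by (intro semistable_left_factor[OF L \<beta>(1,2) X(4) _ X(1) that]) blast
  let ?zs = "map (\<lambda>b. (X b, b)) bs"
  obtain es \<psi> Y where Y: "biorthogonal sc es \<psi>" "set es \<subseteq> fst ` set ?zs"
    "\<And>e. Y e \<in> vs.span (snd ` set ?zs)" "teq2 sc ?zs (map (\<lambda>e. (e, Y e)) es)"
    by (rule teq2_independent_left) (rule that)
  have tY: "teq2 sc ?t (map (\<lambda>e. (e, Y e)) es)" using X(4) Y(4) by (rule teq2_trans)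
  have "snd ` set ?zs \<subseteq> Agr \<beta>'" using subset_trans[OF X(2) t(2)] by (simp add: image_image)
  then have Y_ss: "semistable_mu (Y e)" if "e \<in> set es" for e
    using Y(3) Agr_span
    by (intro semistable_right_factor[OF L \<beta> tY _ Y(1) that]) blast
  have "set (map (\<lambda>e. (e, Y e)) es) \<subseteq> A\<^sub>s\<^sub>s \<times> A\<^sub>s\<^sub>s"
    using Y(2) X_ss Y_ss by (force intro: semistable_in_A_ss)
  then show thesis using tY l' by (intro that) auto
qed

lemma Delta_slope_semistable:
  assumes "semistable_mu a"
  shows "\<exists>zs. set zs \<subseteq> A\<^sub>s\<^sub>s \<times> A\<^sub>s\<^sub>s \<and> teq2 sc (\<Delta>\<^sub>\<mu> a) zs"
proof -
  obtain \<gamma> where "a \<in> Agr \<gamma>" using assms by (auto simp: semistable_def)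
  then obtain L where L: "left_bounded_rep \<gamma> a L" using left_bounded_rep_exists assms by metis
  let ?L = "filter (\<lambda>e. fst e \<in> Gam_mu \<times> Gam_mu) L"
  let ?ls = "remdups (map fst ?L)"
  have "l \<in> fst ` set L" "l \<in> Gam_mu \<times> Gam_mu" if "l \<in> set ?ls" for l
    using that by auto
  then have "\<forall>l\<in>set ?ls. \<exists>zs. set zs \<subseteq> A\<^sub>s\<^sub>s \<times> A\<^sub>s\<^sub>s \<and> teq2 sc (label_block L l) zs"
    using label_block_in_A_ss[OF L] by metis
  then obtain F where F: "\<And>l. l \<in> set ?ls \<Longrightarrow> set (F l) \<subseteq> A\<^sub>s\<^sub>s \<times> A\<^sub>s\<^sub>s \<and> teq2 sc (label_block L l) (F l)"
    by metis
  have L': "graded_rep \<gamma> L" "teq2 sc (\<Delta> a) (map snd L)"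
    using L by (simp_all add: left_bounded_rep_def)
  have "teq2 sc (\<Delta>\<^sub>\<mu> a) (map snd ?L)"
    by (rule Delta_slope_graded_rep[OF L'])
  also have "teq2 sc (map snd ?L) (concat (map (label_block ?L) ?ls))"
    by (rule teq2_label_blocks)
  also have "concat (map (label_block ?L) ?ls) = concat (map (label_block L) ?ls)"
    using label_block_filter[where P = "\<lambda>l. l \<in> Gam_mu \<times> Gam_mu" and L = L]
    by (intro arg_cong[where f = concat] map_cong) auto
  also have "teq2 sc \<dots> (concat (map F ?ls))"
    using F by (intro teq2_concat) blast
  finally have "teq2 sc (\<Delta>\<^sub>\<mu> a) (concat (map F ?ls))" .
  moreover have "set (concat (map F ?ls)) \<subseteq> A\<^sub>s\<^sub>s \<times> A\<^sub>s\<^sub>s"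
    unfolding set_concat set_map using F by blast
  ultimately show ?thesis by blast
qed

lemma Delta_slope_in_A_ss:
  "a \<in> A\<^sub>s\<^sub>s \<Longrightarrow> \<exists>zs. set zs \<subseteq> A\<^sub>s\<^sub>s \<times> A\<^sub>s\<^sub>s \<and> teq2 sc (\<Delta>\<^sub>\<mu> a) zs"
  unfolding A_ss_def
proof (induct rule: vs.span_induct_alt)
  case base
  then show ?case using Delta_slope_zero by (intro exI[of _ "[]"]) simp
next
  case (step c s y)
  obtain zs where zs: "set zs \<subseteq> A\<^sub>s\<^sub>s \<times> A\<^sub>s\<^sub>s" "teq2 sc (\<Delta>\<^sub>\<mu> s) zs"
    using Delta_slope_semistable step(1) by auto
  obtain ws where ws: "set ws \<subseteq> A\<^sub>s\<^sub>s \<times> A\<^sub>s\<^sub>s" "teq2 sc (\<Delta>\<^sub>\<mu> y) ws"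
    using step(2) by (auto simp: A_ss_def)
  have "teq2 sc (\<Delta>\<^sub>\<mu> (sc c s + y)) (\<Delta>\<^sub>\<mu> (sc c s) @ \<Delta>\<^sub>\<mu> y)" by (rule Delta_slope_add)
  also have "teq2 sc \<dots> (map (\<lambda>(u, v). (sc c u, v)) zs @ ws)"
    using Delta_slope_scale teq2_map[OF klinear_endo_scale klinear_endo_id zs(2)] ws(2)
    by (blast intro: teq2_append teq2_trans)
  finally have "teq2 sc (\<Delta>\<^sub>\<mu> (sc c s + y)) (map (\<lambda>(u, v). (sc c u, v)) zs @ ws)" .
  moreover have "set (map (\<lambda>(u, v). (sc c u, v)) zs @ ws) \<subseteq> A\<^sub>s\<^sub>s \<times> A\<^sub>s\<^sub>s"
    using zs(1) ws(1) vs.subspace_scale[OF subspace_A_ss] by auto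
  ultimately show ?case unfolding A_ss_def by blast
qed

lemma bialgebra_on_A_ss: "bialgebra_on sc A\<^sub>s\<^sub>s \<Delta>\<^sub>\<mu> \<epsilon>"
  unfolding bialgebra_on_def
  using subspace_A_ss one_in_A_ss mult_in_A_ss Delta_slope_in_A_ss Delta_slope_add Delta_slope_scale
    counit_add counit_scale coassoc_Delta_slope
    counit_Delta_slope[OF A_ss_subset_A_slope[THEN subsetD]] Delta_slope_mult Delta_slope_one
    counit_mult counit_one
  by blast

end

theorem proposition2p2:
  fixes sc :: "'k::field \<Rightarrow> 'a::ring_1 \<Rightarrow> 'a"
    and \<Gamma> :: "(real \<times> real) set"
    and Agr :: "real \<times> real \<Rightarrow> 'a set"
    and \<Delta> :: "'a \<Rightarrow> ('a \<times> 'a) list"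
    and \<epsilon> :: "'a \<Rightarrow> 'k"
    and \<mu> :: ereal
  assumes "connected_graded_bialgebra sc \<Gamma> Agr \<Delta> \<epsilon>"
    and "\<mu> \<noteq> -\<infinity>"
  shows "A_ss sc \<Gamma> Agr \<Delta> \<mu> \<subseteq> A_slope sc \<Gamma> Agr \<mu>
    \<and> module.subspace sc (A_ss sc \<Gamma> Agr \<Delta> \<mu>)
    \<and> 1 \<in> A_ss sc \<Gamma> Agr \<Delta> \<mu>
    \<and> (\<forall>x\<in>A_ss sc \<Gamma> Agr \<Delta> \<mu>. \<forall>y\<in>A_ss sc \<Gamma> Agr \<Delta> \<mu>. x * y \<in> A_ss sc \<Gamma> Agr \<Delta> \<mu>)
    \<and> (\<forall>a\<in>A_ss sc \<Gamma> Agr \<Delta> \<mu>. \<exists>zs. set zs \<subseteq> A_ss sc \<Gamma> Agr \<Delta> \<mu> \<times> A_ss sc \<Gamma> Agr \<Delta> \<mu>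
          \<and> teq2 sc (Delta_slope \<Gamma> Agr \<Delta> \<mu> a) zs)
    \<and> bialgebra_on sc (A_ss sc \<Gamma> Agr \<Delta> \<mu>) (Delta_slope \<Gamma> Agr \<Delta> \<mu>) \<epsilon>"
proof -
  interpret slope_bialgebra sc \<Gamma> Agr \<Delta> \<epsilon> \<mu>
    using assms by (intro slope_bialgebra.intro graded_bialgebra.intro slope_bialgebra_axioms.intro)
  show ?thesis
    using A_ss_subset_A_slope subspace_A_ss one_in_A_ss mult_in_A_ss Delta_slope_in_A_ss
      bialgebra_on_A_ss
    by blast
qed

end
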